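(* Let $\mathbf{k}$ be a field, $Q$ a finite connected quiver, $\Lambda=\mathbf{k}Q/\mathcal{J}^2$ ($\mathcal{J}$ the arrow ideal), $n\ge2$, and assume $\mathcal{C}\subseteq\operatorname{mod}\Lambda$ is an $n$-cluster tilting subcategory. Then every vertex $v\in Q_0$ satisfies $\delta^-(v)\le2$ and $\delta^+(v)\le2$.
   Context: Modules are finite-dimensional right modules. $\mathcal{C}$ is $n$-cluster tilting if it is functorially finite and $\mathcal{C}=\{X\mid \operatorname{Ext}^i(X,\mathcal{C})=0\ \forall 0<i<n\}=\{X\mid\operatorname{Ext}^i(\mathcal{C},X)=0\ \forall 0<i<n\}$. $\delta^-(v)$ and $\delta^+(v)$ are the numbers of arrows ending, resp. starting, at $v$. *)

theory Defs
  imports "Jordan_Normal_Form.Matrix"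
begin

record ('v,'a) quiver =
  verts :: "'v set"
  arrs  :: "'a set"
  src   :: "'a \<Rightarrow> 'v"
  tgt   :: "'a \<Rightarrow> 'v"

definition finite_quiver :: "('v,'a) quiver \<Rightarrow> bool" where
  "finite_quiver Q \<longleftrightarrow> finite (verts Q) \<and> finite (arrs Q) \<and>
     (\<forall>a\<in>arrs Q. src Q a \<in> verts Q \<and> tgt Q a \<in> verts Q)"

definition connected_quiver :: "('v,'a) quiver \<Rightarrow> bool" where
  "connected_quiver Q \<longleftrightarrow> verts Q \<noteq> {} \<and>
     (\<forall>u\<in>verts Q. \<forall>w\<in>verts Q.
        (u, w) \<in> ({(src Q a, tgt Q a) | a. a \<in> arrs Q} \<union> {(tgt Q a, src Q a) | a. a \<in> arrs Q})\<^sup>*)"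

definition in_degree :: "('v,'a) quiver \<Rightarrow> 'v \<Rightarrow> nat" where
  "in_degree Q v = card {a \<in> arrs Q. tgt Q a = v}"

definition out_degree :: "('v,'a) quiver \<Rightarrow> 'v \<Rightarrow> nat" where
  "out_degree Q v = card {a \<in> arrs Q. src Q a = v}"

text \<open>Finite-dimensional modules over kQ/J^2, as representations of Q with all
  compositions of two consecutive arrows zero: dimension vector and matrices
  (the matrix of arrow a maps k^(dim (src a)) to k^(dim (tgt a))).\<close>
type_synonym ('v,'a,'k) rep = "('v \<Rightarrow> nat) \<times> ('a \<Rightarrow> 'k mat)"

definition is_rep :: "('v,'a) quiver \<Rightarrow> ('v,'a,'k::field) rep \<Rightarrow> bool" where
  "is_rep Q X \<longleftrightarrow>
     (\<forall>v. v \<notin> verts Q \<longrightarrow> fst X v = 0) \<and>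
     (\<forall>a. a \<notin> arrs Q \<longrightarrow> snd X a = 0\<^sub>m 0 0) \<and>
     (\<forall>a\<in>arrs Q. snd X a \<in> carrier_mat (fst X (tgt Q a)) (fst X (src Q a))) \<and>
     (\<forall>a\<in>arrs Q. \<forall>b\<in>arrs Q. src Q b = tgt Q a \<longrightarrow>
        snd X b * snd X a = 0\<^sub>m (fst X (tgt Q b)) (fst X (src Q a)))"

definition rep_hom :: "('v,'a) quiver \<Rightarrow> ('v,'a,'k::field) rep \<Rightarrow> ('v,'a,'k) rep \<Rightarrow> ('v \<Rightarrow> 'k mat) \<Rightarrow> bool" where
  "rep_hom Q X Y f \<longleftrightarrow>
     (\<forall>v\<in>verts Q. f v \<in> carrier_mat (fst Y v) (fst X v)) \<and>
     (\<forall>a\<in>arrs Q. f (tgt Q a) * snd X a = snd Y a * f (src Q a))"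

definition hom_inj :: "('v,'a) quiver \<Rightarrow> ('v,'a,'k::field) rep \<Rightarrow> ('v,'a,'k) rep \<Rightarrow> ('v \<Rightarrow> 'k mat) \<Rightarrow> bool" where
  "hom_inj Q X Y f \<longleftrightarrow> (\<forall>v\<in>verts Q. \<forall>x\<in>carrier_vec (fst X v).
      f v *\<^sub>v x = 0\<^sub>v (fst Y v) \<longrightarrow> x = 0\<^sub>v (fst X v))"

definition hom_surj :: "('v,'a) quiver \<Rightarrow> ('v,'a,'k::field) rep \<Rightarrow> ('v,'a,'k) rep \<Rightarrow> ('v \<Rightarrow> 'k mat) \<Rightarrow> bool" where
  "hom_surj Q X Y f \<longleftrightarrow> (\<forall>v\<in>verts Q. \<forall>y\<in>carrier_vec (fst Y v).
      \<exists>x\<in>carrier_vec (fst X v). f v *\<^sub>v x = y)"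

definition ses :: "('v,'a) quiver \<Rightarrow> ('v,'a,'k::field) rep \<Rightarrow> ('v,'a,'k) rep \<Rightarrow> ('v,'a,'k) rep
    \<Rightarrow> ('v \<Rightarrow> 'k mat) \<Rightarrow> ('v \<Rightarrow> 'k mat) \<Rightarrow> bool" where
  "ses Q X E Z f g \<longleftrightarrow> is_rep Q X \<and> is_rep Q E \<and> is_rep Q Z \<and>
     rep_hom Q X E f \<and> rep_hom Q E Z g \<and> hom_inj Q X E f \<and> hom_surj Q E Z g \<and>
     (\<forall>v\<in>verts Q. \<forall>e\<in>carrier_vec (fst E v).
        g v *\<^sub>v e = 0\<^sub>v (fst Z v) \<longleftrightarrow> (\<exists>x\<in>carrier_vec (fst X v). f v *\<^sub>v x = e))"

definition ses_splits :: "('v,'a) quiver \<Rightarrow> ('v,'a,'k::field) rep \<Rightarrow> ('v,'a,'k) rep \<Rightarrow> ('v \<Rightarrow> 'k mat) \<Rightarrow> bool" where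
  "ses_splits Q X E f \<longleftrightarrow> (\<exists>r. rep_hom Q E X r \<and> (\<forall>v\<in>verts Q. r v * f v = 1\<^sub>m (fst X v)))"

definition projective_rep :: "('v,'a) quiver \<Rightarrow> ('v,'a,'k::field) rep \<Rightarrow> bool" where
  "projective_rep Q P \<longleftrightarrow> is_rep Q P \<and>
     (\<forall>E Z g h. is_rep Q E \<and> is_rep Q Z \<and> rep_hom Q E Z g \<and> hom_surj Q E Z g \<and> rep_hom Q P Z h
        \<longrightarrow> (\<exists>l. rep_hom Q P E l \<and> (\<forall>v\<in>verts Q. g v * l v = h v)))"

text \<open>ext_zero Q i X Y means Ext^i(X,Y) = 0. Ext^0 = Hom; Ext^1 vanishes iff every
  extension of X by Y splits; higher Ext by dimension shifting along a
  projective presentation 0 -> K -> P -> X -> 0.\<close>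
fun ext_zero :: "('v,'a) quiver \<Rightarrow> nat \<Rightarrow> ('v,'a,'k::field) rep \<Rightarrow> ('v,'a,'k) rep \<Rightarrow> bool" where
  "ext_zero Q 0 X Y = (\<forall>h. rep_hom Q X Y h \<longrightarrow> (\<forall>v\<in>verts Q. h v = 0\<^sub>m (fst Y v) (fst X v)))"
| "ext_zero Q (Suc 0) X Y = (\<forall>E f g. ses Q Y E X f g \<longrightarrow> ses_splits Q Y E f)"
| "ext_zero Q (Suc (Suc i)) X Y = (\<exists>K P f g. projective_rep Q P \<and> ses Q K P X f g \<and> ext_zero Q (Suc i) K Y)"

definition right_approx :: "('v,'a) quiver \<Rightarrow> ('v,'a,'k::field) rep set \<Rightarrow> ('v,'a,'k) rep \<Rightarrow> ('v,'a,'k) rep \<Rightarrow> ('v \<Rightarrow> 'k mat) \<Rightarrow> bool" where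
  "right_approx Q \<C> X C f \<longleftrightarrow> C \<in> \<C> \<and> rep_hom Q C X f \<and>
     (\<forall>C'\<in>\<C>. \<forall>h. rep_hom Q C' X h \<longrightarrow> (\<exists>u. rep_hom Q C' C u \<and> (\<forall>v\<in>verts Q. f v * u v = h v)))"

definition left_approx :: "('v,'a) quiver \<Rightarrow> ('v,'a,'k::field) rep set \<Rightarrow> ('v,'a,'k) rep \<Rightarrow> ('v,'a,'k) rep \<Rightarrow> ('v \<Rightarrow> 'k mat) \<Rightarrow> bool" where
  "left_approx Q \<C> X C f \<longleftrightarrow> C \<in> \<C> \<and> rep_hom Q X C f \<and>
     (\<forall>C'\<in>\<C>. \<forall>h. rep_hom Q X C' h \<longrightarrow> (\<exists>u. rep_hom Q C C' u \<and> (\<forall>v\<in>verts Q. u v * f v = h v)))"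

definition functorially_finite :: "('v,'a) quiver \<Rightarrow> ('v,'a,'k::field) rep set \<Rightarrow> bool" where
  "functorially_finite Q \<C> \<longleftrightarrow> \<C> \<subseteq> {X. is_rep Q X} \<and>
     (\<forall>X. is_rep Q X \<longrightarrow> (\<exists>C f. right_approx Q \<C> X C f) \<and> (\<exists>C f. left_approx Q \<C> X C f))"

definition n_cluster_tilting :: "('v,'a) quiver \<Rightarrow> nat \<Rightarrow> ('v,'a,'k::field) rep set \<Rightarrow> bool" where
  "n_cluster_tilting Q n \<C> \<longleftrightarrow> functorially_finite Q \<C> \<and>
     \<C> = {X. is_rep Q X \<and> (\<forall>i. 0 < i \<and> i < n \<longrightarrow> (\<forall>C\<in>\<C>. ext_zero Q i X C))} \<and>
     \<C> = {X. is_rep Q X \<and> (\<forall>i. 0 < i \<and> i < n \<longrightarrow> (\<forall>C\<in>\<C>. ext_zero Q i C X))}"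

end

theory Submission
  imports Defs "Jordan_Normal_Form.Gauss_Jordan_Elimination"
begin

text \<open>For n \<ge> 2 an n-cluster tilting subcategory contains every projective and every injective
  module, so Ext^1(I_x, P_y) = 0 for all vertices x and y. If three arrows b1, b2, b3 leave a
  vertex y (or enter a vertex x), take b1 : y \<rightarrow> x and glue I_x to P_y along b2. Restricting a
  retraction of 0 \<rightarrow> P_y \<rightarrow> E \<rightarrow> I_x \<rightarrow> 0 to the arrows b2 and b3 computes one coordinate
  of P_y in two ways, once as 0 and once as 1, so this extension does not split.\<close>

section \<open>Linear algebra\<close>

lemma pivot_selection_left_inverse:
  fixes C :: "'k::field mat"
  assumes C: "C \<in> carrier_mat m n" and piv: "pivot_fun C f n"
    and all_pivots: "snd ` set (pivot_positions C) = {0..<n}"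
  obtains S where "S \<in> carrier_mat n m" "S * C = 1\<^sub>m n"
proof -
  note pd = pivot_funD[OF carrier_matD(1)[OF C] piv]
  have surj: "\<exists>i<m. f i = j" if "j < n" for j
  proof -
    have "j \<in> snd ` set (pivot_positions C)" using that all_pivots by auto
    then show ?thesis using pivot_positions(1)[OF C piv] by auto
  qed
  have inj: "i = i'" if "i < m" "i' < m" "f i = f i'" "f i < n" for i i'
    using pd(4)[of i'] pd(5)[of i i'] that by fastforce
  define S where "S = mat n m (\<lambda>(j,i). if f i = j then (1::'k) else 0)"
  have "S * C = 1\<^sub>m n"
  proof (rule eq_matI)
    fix j k assume "j < dim_row (1\<^sub>m n :: 'k mat)" and "k < dim_col (1\<^sub>m n :: 'k mat)"
    then have j: "j < n" and k: "k < n" by auto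
    obtain i where i: "i < m" "f i = j" using surj[OF j] by auto
    obtain i2 where i2: "i2 < m" "f i2 = k" using surj[OF k] by auto
    have "(S * C) $$ (j,k) = (\<Sum>i'<m. (if f i' = j then 1 else 0) * C $$ (i',k))"
      using j k C by (simp add: S_def scalar_prod_def lessThan_atLeast0)
    also have "\<dots> = (\<Sum>i'\<in>{i}. (if f i' = j then 1 else 0) * C $$ (i',k))"
      by (rule sum.mono_neutral_right) (use i inj j in auto)
    also have "\<dots> = C $$ (i,k)" using i by simp
    also have "\<dots> = (1\<^sub>m n :: 'k mat) $$ (j,k)"
      using pd(4)[of i] pd(5)[of i2 i] inj[of i i2] i i2 j k by (cases "i = i2") auto
    finally show "(S * C) $$ (j,k) = (1\<^sub>m n :: 'k mat) $$ (j,k)" .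
  qed (use C in \<open>auto simp: S_def\<close>)
  then show thesis by (intro that[of S]) (auto simp: S_def)
qed

lemma mat_left_inverse_if_inj:
  fixes A :: "'k::field mat"
  assumes A: "A \<in> carrier_mat m n"
    and inj: "\<And>x. x \<in> carrier_vec n \<Longrightarrow> A *\<^sub>v x = 0\<^sub>v m \<Longrightarrow> x = 0\<^sub>v n"
  obtains L where "L \<in> carrier_mat n m" "L * A = 1\<^sub>m n"
proof -
  define C where "C = gauss_jordan_single A"
  note gj = gauss_jordan_single[OF A C_def[symmetric]]
  obtain P where CPA: "C = P * A" and P: "P \<in> carrier_mat m m" using gj(4) by blast
  obtain f where piv: "pivot_fun C f n" using gj(2,3) unfolding row_echelon_form_def by auto
  have "snd ` set (pivot_positions C) = {0..<n}"
  proof (rule ccontr)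
    assume "snd ` set (pivot_positions C) \<noteq> {0..<n}"
    note fb = find_base_vector[OF gj(3) gj(2) this]
    have "A *\<^sub>v find_base_vector C = 0\<^sub>v m" using gj(1)[OF fb(1)] fb(3) by simp
    with fb(1,2) inj show False by blast
  qed
  then obtain S where S: "S \<in> carrier_mat n m" "S * C = 1\<^sub>m n"
    using pivot_selection_left_inverse[OF gj(2) piv] by blast
  have "(S * P) * A = 1\<^sub>m n" using S CPA P A by (simp add: assoc_mult_mat[of S n m P m A n])
  with S P show thesis by (intro that[of "S * P"]) auto
qed

lemma mat_mult_left_cancel_inj:
  fixes F :: "'k::field mat"
  assumes F: "F \<in> carrier_mat m n"
    and inj: "\<And>x. x \<in> carrier_vec n \<Longrightarrow> F *\<^sub>v x = 0\<^sub>v m \<Longrightarrow> x = 0\<^sub>v n"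
    and A: "A \<in> carrier_mat n k" and B: "B \<in> carrier_mat n k" and eq: "F * A = F * B"
  shows "A = B"
proof -
  obtain L where L: "L \<in> carrier_mat n m" "L * F = 1\<^sub>m n" using mat_left_inverse_if_inj[OF F inj] .
  have "A = (L * F) * A" using L A by simp
  also have "\<dots> = L * (F * A)" by (rule assoc_mult_mat[OF L(1) F A])
  also have "\<dots> = L * (F * B)" using eq by simp
  also have "\<dots> = B" using L F B by (simp add: assoc_mult_mat[of L n m F n B k, symmetric])
  finally show ?thesis .
qed

lemma mat_eq_on_vecI:
  fixes A B :: "'k::field mat"
  assumes A: "A \<in> carrier_mat m n" and B: "B \<in> carrier_mat m n"
    and eq: "\<And>v. v \<in> carrier_vec n \<Longrightarrow> A *\<^sub>v v = B *\<^sub>v v"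
  shows "A = B"
proof (rule eq_matI)
  fix i j assume i: "i < dim_row B" and j: "j < dim_col B"
  have "(A *\<^sub>v unit_vec n j) $ i = (B *\<^sub>v unit_vec n j) $ i" using eq by simp
  then show "A $$ (i,j) = B $$ (i,j)" using i j A B by (simp add: row_def)
qed (use A B in auto)

lemma mult_mat_vec_zero[simp]: "dim_col A = n \<Longrightarrow> A *\<^sub>v 0\<^sub>v n = (0\<^sub>v (dim_row A) :: 'k::field vec)"
  by (rule eq_vecI) auto

lemma zero_vec_append[simp]: "0\<^sub>v n @\<^sub>v 0\<^sub>v m = (0\<^sub>v (n + m) :: 'k::zero vec)"
  by (rule eq_vecI) auto

lemma mat_zero_cols_eq: "A \<in> carrier_mat m 0 \<Longrightarrow> B \<in> carrier_mat m 0 \<Longrightarrow> A = B"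
  by (intro eq_matI) auto

lemma complement_of_section_mult_left:
  fixes g \<sigma> :: "'k::field mat"
  assumes g: "g \<in> carrier_mat m n" and \<sigma>: "\<sigma> \<in> carrier_mat n m" and g\<sigma>: "g * \<sigma> = 1\<^sub>m m"
  shows "g * (1\<^sub>m n - \<sigma> * g) = 0\<^sub>m m n"
proof -
  have "g * (1\<^sub>m n - \<sigma> * g) = g * 1\<^sub>m n - g * (\<sigma> * g)"
    by (rule mult_minus_distrib_mat[OF g]) (use \<sigma> g in auto)
  also have "\<dots> = g - (g * \<sigma>) * g" using g \<sigma> by (simp add: assoc_mult_mat[OF g \<sigma> g])
  finally show ?thesis using g\<sigma> g by simp
qed

lemma complement_of_section_mult_right:
  fixes g \<sigma> f :: "'k::field mat"
  assumes g: "g \<in> carrier_mat m n" and \<sigma>: "\<sigma> \<in> carrier_mat n m" and f: "f \<in> carrier_mat n k"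
    and gf: "g * f = 0\<^sub>m m k"
  shows "(1\<^sub>m n - \<sigma> * g) * f = f"
proof -
  have "(1\<^sub>m n - \<sigma> * g) * f = 1\<^sub>m n * f - (\<sigma> * g) * f"
    by (rule minus_mult_distrib_mat[OF _ _ f]) (use \<sigma> g in auto)
  also have "\<dots> = f - 0\<^sub>m n k" using f gf \<sigma> g by (simp add: assoc_mult_mat[OF \<sigma> g f] right_mult_zero_mat)
  finally show ?thesis using f by (auto intro!: eq_matI)
qed

lemma mult_mat_vec_unit: "(A :: 'k::field mat) \<in> carrier_mat m n \<Longrightarrow> j < n \<Longrightarrow> A *\<^sub>v unit_vec n j = col A j"
  by (rule eq_vecI) auto

lemma transpose_mult_vec_unit: "(A :: 'k::field mat) \<in> carrier_mat m n \<Longrightarrow> i < m \<Longrightarrow> transpose_mat A *\<^sub>v unit_vec m i = row A i"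
  by (rule eq_vecI) auto

lemma row_mult_as_transpose:
  fixes A :: "'k::field mat"
  assumes "A \<in> carrier_mat nr n" "B \<in> carrier_mat n nc" "i < nr"
  shows "row (A * B) i = transpose_mat B *\<^sub>v row A i"
  by (rule eq_vecI) (use assms in \<open>auto simp: comm_scalar_prod[of _ n]\<close>)

lemma four_block_upper_mult_eq_zero:
  fixes A1 :: "'k::field mat"
  assumes c: "A1 \<in> carrier_mat nr1 n1" "B1 \<in> carrier_mat nr1 n2" "D1 \<in> carrier_mat nr2 n2"
    "A2 \<in> carrier_mat n1 nc1" "B2 \<in> carrier_mat n1 nc2" "D2 \<in> carrier_mat n2 nc2"
    and z: "A1 * A2 = 0\<^sub>m nr1 nc1" "A1 * B2 + B1 * D2 = 0\<^sub>m nr1 nc2" "D1 * D2 = 0\<^sub>m nr2 nc2"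
  shows "four_block_mat A1 B1 (0\<^sub>m nr2 n1) D1 * four_block_mat A2 B2 (0\<^sub>m n2 nc1) D2
    = 0\<^sub>m (nr1 + nr2) (nc1 + nc2)"
proof -
  have "four_block_mat A1 B1 (0\<^sub>m nr2 n1) D1 * four_block_mat A2 B2 (0\<^sub>m n2 nc1) D2 =
    four_block_mat (A1 * A2 + B1 * 0\<^sub>m n2 nc1) (A1 * B2 + B1 * D2)
    (0\<^sub>m nr2 n1 * A2 + D1 * 0\<^sub>m n2 nc1) (0\<^sub>m nr2 n1 * B2 + D1 * D2)"
    by (rule mult_four_block_mat) (use c in auto)
  also have "\<dots> = four_block_mat (0\<^sub>m nr1 nc1) (0\<^sub>m nr1 nc2) (0\<^sub>m nr2 nc1) (0\<^sub>m nr2 nc2)"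
    using z c by (simp add: right_mult_zero_mat left_mult_zero_mat)
  finally show ?thesis by (auto intro!: eq_matI)
qed

lemma four_block_upper_mult_vec:
  fixes A :: "'k::field mat"
  assumes A: "A \<in> carrier_mat nr1 nc1" and B: "B \<in> carrier_mat nr1 nc2" and D: "D \<in> carrier_mat nr2 nc2"
    and a: "a \<in> carrier_vec nc1" and d: "d \<in> carrier_vec nc2"
  shows "four_block_mat A B (0\<^sub>m nr2 nc1) D *\<^sub>v (a @\<^sub>v d) = (A *\<^sub>v a + B *\<^sub>v d) @\<^sub>v (D *\<^sub>v d)"
  using four_block_mat_mult_vec[OF A B _ D a d] D d a by auto

lemma carrier_vec_append_cases:
  assumes "e \<in> carrier_vec (n + m)"
  obtains a d where "a \<in> carrier_vec n" "d \<in> carrier_vec m" "e = a @\<^sub>v d"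
  using vec_first_last_append[OF assms] vec_first_carrier vec_last_carrier by metis

definition rel_mat :: "('l \<Rightarrow> 'l \<Rightarrow> bool) \<Rightarrow> 'l list \<Rightarrow> 'l list \<Rightarrow> 'k::field mat" where
  "rel_mat R rs cs = mat (length rs) (length cs) (\<lambda>(i,j). if R (rs!i) (cs!j) then 1 else 0)"

definition label_vec :: "'l list \<Rightarrow> 'l \<Rightarrow> 'k::field vec" where
  "label_vec L t = vec (length L) (\<lambda>i. if L!i = t then 1 else 0)"

lemma rel_mat_carrier[simp]: "rel_mat R rs cs \<in> carrier_mat (length rs) (length cs)"
  and dim_row_rel_mat[simp]: "dim_row (rel_mat R rs cs) = length rs"
  and dim_col_rel_mat[simp]: "dim_col (rel_mat R rs cs) = length cs"
  by (auto simp: rel_mat_def)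

lemma index_rel_mat[simp]:
  "i < length rs \<Longrightarrow> j < length cs \<Longrightarrow> rel_mat R rs cs $$ (i,j) = (if R (rs!i) (cs!j) then 1 else 0)"
  by (simp add: rel_mat_def)

lemma row_rel_mat:
  "i < length rs \<Longrightarrow> row (rel_mat R rs cs) i = vec (length cs) (\<lambda>j. if R (rs!i) (cs!j) then 1 else 0)"
  by (rule eq_vecI) auto

lemma col_rel_mat:
  "j < length cs \<Longrightarrow> col (rel_mat R rs cs) j = vec (length rs) (\<lambda>i. if R (rs!i) (cs!j) then 1 else 0)"
  by (rule eq_vecI) auto

lemma rel_mat_mult_eq_zero:
  assumes "\<And>a b c. R a b \<Longrightarrow> S b c \<Longrightarrow> False"
  shows "rel_mat R L1 L2 * rel_mat S L2 L3 = (0\<^sub>m (length L1) (length L3) :: 'k::field mat)"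
proof (rule eq_matI)
  fix i j assume "i < dim_row (0\<^sub>m (length L1) (length L3) :: 'k mat)"
    and "j < dim_col (0\<^sub>m (length L1) (length L3) :: 'k mat)"
  then show "(rel_mat R L1 L2 * rel_mat S L2 L3 :: 'k mat) $$ (i,j) = 0\<^sub>m (length L1) (length L3) $$ (i,j)"
    using assms by (auto simp: scalar_prod_def intro!: sum.neutral)
qed auto

lemma label_vec_carrier[simp]: "label_vec L t \<in> carrier_vec (length L)"
  and dim_label_vec[simp]: "dim_vec (label_vec L t) = length L"
  by (auto simp: label_vec_def)

lemma index_label_vec[simp]: "i < length L \<Longrightarrow> label_vec L t $ i = (if L!i = t then 1 else 0)"
  by (simp add: label_vec_def)

lemma label_vec_nth: "distinct L \<Longrightarrow> k < length L \<Longrightarrow> label_vec L (L!k) = unit_vec (length L) k"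
  by (rule eq_vecI) (auto simp: nth_eq_iff_index_eq)

lemma rel_mat_mult_label_vec:
  assumes "distinct cs" and "t \<in> set cs"
  shows "rel_mat R rs cs *\<^sub>v label_vec cs t = (vec (length rs) (\<lambda>i. if R (rs!i) t then 1 else 0) :: 'k::field vec)"
proof -
  obtain k where k: "k < length cs" "cs ! k = t" using assms(2) by (auto simp: in_set_conv_nth)
  then have "rel_mat R rs cs *\<^sub>v label_vec cs t = rel_mat R rs cs *\<^sub>v (unit_vec (length cs) k :: 'k vec)"
    using label_vec_nth[OF assms(1)] by metis
  also have "\<dots> = col (rel_mat R rs cs) k" by (rule mult_mat_vec_unit[OF rel_mat_carrier k(1)])
  finally show ?thesis using col_rel_mat[OF k(1)] k(2) by simp
qed

section \<open>Morphisms and extensions of representations\<close>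

lemma arr_src_in_verts: "finite_quiver Q \<Longrightarrow> a \<in> arrs Q \<Longrightarrow> src Q a \<in> verts Q"
  and arr_tgt_in_verts: "finite_quiver Q \<Longrightarrow> a \<in> arrs Q \<Longrightarrow> tgt Q a \<in> verts Q"
  by (auto simp: finite_quiver_def)

lemma rep_arr_carrier:
  "is_rep Q X \<Longrightarrow> a \<in> arrs Q \<Longrightarrow> snd X a \<in> carrier_mat (fst X (tgt Q a)) (fst X (src Q a))"
  by (simp add: is_rep_def)

lemma rep_hom_carrier: "rep_hom Q X Y f \<Longrightarrow> v \<in> verts Q \<Longrightarrow> f v \<in> carrier_mat (fst Y v) (fst X v)"
  by (simp add: rep_hom_def)

lemma rep_hom_arr: "rep_hom Q X Y f \<Longrightarrow> a \<in> arrs Q \<Longrightarrow> f (tgt Q a) * snd X a = snd Y a * f (src Q a)"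
  by (simp add: rep_hom_def)

lemma rep_hom_id: "is_rep Q X \<Longrightarrow> rep_hom Q X X (\<lambda>v. 1\<^sub>m (fst X v))"
  by (auto simp: rep_hom_def dest: rep_arr_carrier)

definition rep_of :: "('v,'a) quiver \<Rightarrow> ('v \<Rightarrow> nat) \<Rightarrow> ('a \<Rightarrow> 'k mat) \<Rightarrow> ('v,'a,'k::field) rep" where
  "rep_of Q d M = (d, \<lambda>c. if c \<in> arrs Q then M c else 0\<^sub>m 0 0)"

lemma fst_rep_of[simp]: "fst (rep_of Q d M) = d"
  and snd_rep_of[simp]: "c \<in> arrs Q \<Longrightarrow> snd (rep_of Q d M) c = M c"
  by (simp_all add: rep_of_def)

lemma is_rep_rep_of:
  assumes "\<And>v. v \<notin> verts Q \<Longrightarrow> d v = 0"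
    and "\<And>a. a \<in> arrs Q \<Longrightarrow> M a \<in> carrier_mat (d (tgt Q a)) (d (src Q a))"
    and "\<And>a b. a \<in> arrs Q \<Longrightarrow> b \<in> arrs Q \<Longrightarrow> src Q b = tgt Q a \<Longrightarrow>
      M b * M a = 0\<^sub>m (d (tgt Q b)) (d (src Q a))"
  shows "is_rep Q (rep_of Q d M)"
  using assms by (simp add: is_rep_def rep_of_def)

lemma rep_hom_comp:
  assumes fq: "finite_quiver Q" and X: "is_rep Q X" and Y: "is_rep Q Y" and Z: "is_rep Q Z"
    and f: "rep_hom Q X Y f" and g: "rep_hom Q Y Z g"
  shows "rep_hom Q X Z (\<lambda>v. g v * f v)"
  unfolding rep_hom_def
proof (intro conjI ballI)
  fix v assume v: "v \<in> verts Q"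
  show "g v * f v \<in> carrier_mat (fst Z v) (fst X v)"
    using rep_hom_carrier[OF f v] rep_hom_carrier[OF g v] by simp
next
  fix a assume a: "a \<in> arrs Q"
  define s t where "s = src Q a" and "t = tgt Q a"
  have sv: "s \<in> verts Q" and tv: "t \<in> verts Q"
    using fq a by (auto simp: s_def t_def arr_src_in_verts arr_tgt_in_verts)
  have Xa: "snd X a \<in> carrier_mat (fst X t) (fst X s)" and Ya: "snd Y a \<in> carrier_mat (fst Y t) (fst Y s)"
    and Za: "snd Z a \<in> carrier_mat (fst Z t) (fst Z s)"
    using rep_arr_carrier[OF X a] rep_arr_carrier[OF Y a] rep_arr_carrier[OF Z a] by (simp_all add: s_def t_def)
  have fs: "f s \<in> carrier_mat (fst Y s) (fst X s)" and ft: "f t \<in> carrier_mat (fst Y t) (fst X t)"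
    and gs: "g s \<in> carrier_mat (fst Z s) (fst Y s)" and gt: "g t \<in> carrier_mat (fst Z t) (fst Y t)"
    using rep_hom_carrier[OF f] rep_hom_carrier[OF g] sv tv by auto
  have "g t * f t * snd X a = g t * (snd Y a * f s)"
    using assoc_mult_mat[OF gt ft Xa] rep_hom_arr[OF f a] by (simp add: s_def t_def)
  also have "\<dots> = (snd Z a * g s) * f s"
    using assoc_mult_mat[OF gt Ya fs] rep_hom_arr[OF g a] by (simp add: s_def t_def)
  also have "\<dots> = snd Z a * (g s * f s)" by (rule assoc_mult_mat[OF Za gs fs])
  finally show "g (tgt Q a) * f (tgt Q a) * snd X a = snd Z a * (g (src Q a) * f (src Q a))"
    by (simp add: s_def t_def)
qed

lemma rep_hom_diff:
  fixes f g :: "'v \<Rightarrow> 'k::field mat"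
  assumes fq: "finite_quiver Q" and X: "is_rep Q X" and Y: "is_rep Q Y"
    and f: "rep_hom Q X Y f" and g: "rep_hom Q X Y g"
  shows "rep_hom Q X Y (\<lambda>v. f v - g v)"
  unfolding rep_hom_def
proof (intro conjI ballI)
  fix v assume v: "v \<in> verts Q"
  show "f v - g v \<in> carrier_mat (fst Y v) (fst X v)"
    by (rule minus_carrier_mat[OF rep_hom_carrier[OF g v]])
next
  fix a assume a: "a \<in> arrs Q"
  define s t where "s = src Q a" and "t = tgt Q a"
  have sv: "s \<in> verts Q" and tv: "t \<in> verts Q"
    using fq a by (auto simp: s_def t_def arr_src_in_verts arr_tgt_in_verts)
  have Xa: "snd X a \<in> carrier_mat (fst X t) (fst X s)" and Ya: "snd Y a \<in> carrier_mat (fst Y t) (fst Y s)"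
    using rep_arr_carrier[OF X a] rep_arr_carrier[OF Y a] by (simp_all add: s_def t_def)
  have fs: "f s \<in> carrier_mat (fst Y s) (fst X s)" and ft: "f t \<in> carrier_mat (fst Y t) (fst X t)"
    and gs: "g s \<in> carrier_mat (fst Y s) (fst X s)" and gt: "g t \<in> carrier_mat (fst Y t) (fst X t)"
    using rep_hom_carrier[OF f] rep_hom_carrier[OF g] sv tv by auto
  have "(f t - g t) * snd X a = snd Y a * f s - snd Y a * g s"
    using minus_mult_distrib_mat[OF ft gt Xa] rep_hom_arr[OF f a] rep_hom_arr[OF g a] by (simp add: s_def t_def)
  also have "\<dots> = snd Y a * (f s - g s)" by (rule mult_minus_distrib_mat[OF Ya fs gs, symmetric])
  finally show "(f (tgt Q a) - g (tgt Q a)) * snd X a = snd Y a * (f (src Q a) - g (src Q a))"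
    by (simp add: s_def t_def)
qed

lemma hom_inj_left_inverse:
  assumes "rep_hom Q X Y f" and "hom_inj Q X Y f" and "v \<in> verts Q"
  obtains L where "L \<in> carrier_mat (fst X v) (fst Y v)" "L * f v = 1\<^sub>m (fst X v)"
  using mat_left_inverse_if_inj[OF rep_hom_carrier[OF assms(1,3)]] assms(2,3)
  unfolding hom_inj_def by metis

lemma ses_comp_zero:
  fixes f g :: "'v \<Rightarrow> 'k::field mat"
  assumes s: "ses Q X E Z f g" and v: "v \<in> verts Q"
  shows "g v * f v = 0\<^sub>m (fst Z v) (fst X v)"
proof -
  have f: "f v \<in> carrier_mat (fst E v) (fst X v)" and g: "g v \<in> carrier_mat (fst Z v) (fst E v)"
    using s v by (auto simp: ses_def rep_hom_def)
  show ?thesis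
  proof (rule mat_eq_on_vecI)
    fix x :: "'k vec" assume x: "x \<in> carrier_vec (fst X v)"
    have "f v *\<^sub>v x \<in> carrier_vec (fst E v)" using f x by simp
    then have "g v *\<^sub>v (f v *\<^sub>v x) = 0\<^sub>v (fst Z v)" using s v x unfolding ses_def by blast
    then show "(g v * f v) *\<^sub>v x = 0\<^sub>m (fst Z v) (fst X v) *\<^sub>v x" using f g x by auto
  qed (use f g in auto)
qed

lemma rep_hom_factor_through_inj:
  fixes f r \<phi> :: "'v \<Rightarrow> 'k::field mat"
  assumes fq: "finite_quiver Q" and X: "is_rep Q X" and C: "is_rep Q C" and E: "is_rep Q E"
    and f: "rep_hom Q C E f" and f_inj: "hom_inj Q C E f" and \<phi>: "rep_hom Q X E \<phi>"
    and r: "\<And>v. v \<in> verts Q \<Longrightarrow> r v \<in> carrier_mat (fst C v) (fst X v)"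
    and fr: "\<And>v. v \<in> verts Q \<Longrightarrow> f v * r v = \<phi> v"
  shows "rep_hom Q X C r"
  unfolding rep_hom_def
proof (intro conjI ballI r)
  fix a assume a: "a \<in> arrs Q"
  define s t where "s = src Q a" and "t = tgt Q a"
  have s: "s \<in> verts Q" and t: "t \<in> verts Q"
    using fq a by (auto simp: s_def t_def arr_src_in_verts arr_tgt_in_verts)
  have Xa: "snd X a \<in> carrier_mat (fst X t) (fst X s)" and Ca: "snd C a \<in> carrier_mat (fst C t) (fst C s)"
    and Ea: "snd E a \<in> carrier_mat (fst E t) (fst E s)"
    using rep_arr_carrier[OF X a] rep_arr_carrier[OF C a] rep_arr_carrier[OF E a] by (simp_all add: s_def t_def)
  have fs: "f s \<in> carrier_mat (fst E s) (fst C s)" and ft: "f t \<in> carrier_mat (fst E t) (fst C t)"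
    using rep_hom_carrier[OF f] s t by auto
  have rs: "r s \<in> carrier_mat (fst C s) (fst X s)" and rt: "r t \<in> carrier_mat (fst C t) (fst X t)"
    using r s t by auto
  have "f t * (r t * snd X a) = (f t * r t) * snd X a" using ft rt Xa by (simp add: assoc_mult_mat)
  also have "\<dots> = snd E a * \<phi> s" using fr[OF t] rep_hom_arr[OF \<phi> a] by (simp add: s_def t_def)
  also have "\<dots> = (snd E a * f s) * r s" using fr[OF s] Ea fs rs by (simp add: assoc_mult_mat)
  also have "\<dots> = f t * (snd C a * r s)"
    using rep_hom_arr[OF f a, symmetric] assoc_mult_mat[OF ft Ca rs] by (simp add: s_def t_def)
  finally have eq: "f t * (r t * snd X a) = f t * (snd C a * r s)" .
  have inj: "\<And>x. x \<in> carrier_vec (fst C t) \<Longrightarrow> f t *\<^sub>v x = 0\<^sub>v (fst E t) \<Longrightarrow> x = 0\<^sub>v (fst C t)"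
    using f_inj t by (simp add: hom_inj_def)
  show "r (tgt Q a) * snd X a = snd C a * r (src Q a)"
    unfolding s_def[symmetric] t_def[symmetric]
    by (rule mat_mult_left_cancel_inj[OF ft inj _ _ eq]) (use rt Xa Ca rs in auto)
qed

lemma ses_left_inverse_on_kernel:
  fixes f g :: "'v \<Rightarrow> 'k::field mat"
  assumes s: "ses Q X E Z f g" and v: "v \<in> verts Q"
    and L: "L \<in> carrier_mat (fst X v) (fst E v)" and Lf: "L * f v = 1\<^sub>m (fst X v)"
    and \<phi>: "\<phi> \<in> carrier_mat (fst E v) k" and g\<phi>: "g v * \<phi> = 0\<^sub>m (fst Z v) k"
  shows "f v * (L * \<phi>) = \<phi>"
proof (rule mat_eq_on_vecI)
  have f: "f v \<in> carrier_mat (fst E v) (fst X v)" and g: "g v \<in> carrier_mat (fst Z v) (fst E v)"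
    using s v by (auto simp: ses_def rep_hom_def)
  fix e :: "'k vec" assume e: "e \<in> carrier_vec k"
  have "g v *\<^sub>v (\<phi> *\<^sub>v e) = 0\<^sub>v (fst Z v)"
    using g\<phi> g \<phi> e by (auto simp flip: assoc_mult_mat_vec)
  then obtain c where c: "c \<in> carrier_vec (fst X v)" and fc: "f v *\<^sub>v c = \<phi> *\<^sub>v e"
    using s v \<phi> e unfolding ses_def by (meson mult_mat_vec_carrier)
  have "(L * \<phi>) *\<^sub>v e = (L * f v) *\<^sub>v c"
    using assoc_mult_mat_vec[OF L \<phi> e] assoc_mult_mat_vec[OF L f c] fc by simp
  then show "(f v * (L * \<phi>)) *\<^sub>v e = \<phi> *\<^sub>v e"
    using assoc_mult_mat_vec[OF f mult_carrier_mat[OF L \<phi>] e] Lf c fc by simp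
qed (use s v L \<phi> in \<open>auto simp: ses_def rep_hom_def\<close>)

text \<open>A section \<sigma> of g gives the idempotent 1 - \<sigma> g onto ker g = im f, and L (1 - \<sigma> g)
  with L a left inverse of f is the retraction.\<close>
lemma ses_splits_if_projective:
  fixes f g :: "'v \<Rightarrow> 'k::field mat"
  assumes fq: "finite_quiver Q" and P: "projective_rep Q P" and s: "ses Q C E P f g"
  shows "ses_splits Q C E f"
proof -
  have C: "is_rep Q C" and E: "is_rep Q E" and P_rep: "is_rep Q P"
    and f: "rep_hom Q C E f" and f_inj: "hom_inj Q C E f"
    and g: "rep_hom Q E P g" and g_surj: "hom_surj Q E P g"
    using s unfolding ses_def by blast+
  obtain \<sigma> where \<sigma>: "rep_hom Q P E \<sigma>" and g\<sigma>: "\<forall>v\<in>verts Q. g v * \<sigma> v = 1\<^sub>m (fst P v)"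
    using P E P_rep g g_surj rep_hom_id[OF P_rep] unfolding projective_rep_def by blast
  have "\<forall>v\<in>verts Q. \<exists>L. L \<in> carrier_mat (fst C v) (fst E v) \<and> L * f v = 1\<^sub>m (fst C v)"
    using hom_inj_left_inverse[OF f f_inj] by metis
  then obtain L where L: "\<And>v. v \<in> verts Q \<Longrightarrow> L v \<in> carrier_mat (fst C v) (fst E v)"
    and Lf: "\<And>v. v \<in> verts Q \<Longrightarrow> L v * f v = 1\<^sub>m (fst C v)"
    by metis
  define \<phi> where "\<phi> v = 1\<^sub>m (fst E v) - \<sigma> v * g v" for v
  have \<phi>: "rep_hom Q E E \<phi>"
    unfolding \<phi>_def by (rule rep_hom_diff[OF fq E E rep_hom_id[OF E] rep_hom_comp[OF fq E P_rep E g \<sigma>]])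
  define r where "r v = L v * \<phi> v" for v
  have fr: "f v * r v = \<phi> v" if v: "v \<in> verts Q" for v
    using ses_left_inverse_on_kernel[OF s v L[OF v] Lf[OF v] rep_hom_carrier[OF \<phi> v]]
      complement_of_section_mult_left[OF rep_hom_carrier[OF g v] rep_hom_carrier[OF \<sigma> v]] g\<sigma> v
    by (simp add: r_def \<phi>_def)
  have r: "rep_hom Q E C r"
    by (rule rep_hom_factor_through_inj[OF fq E C E f f_inj \<phi> _ fr])
      (use mult_carrier_mat[OF L rep_hom_carrier[OF \<phi>]] in \<open>simp add: r_def\<close>)
  have "r v * f v = 1\<^sub>m (fst C v)" if v: "v \<in> verts Q" for v
  proof -
    note fv = rep_hom_carrier[OF f v]
    have "\<phi> v * f v = f v"
      unfolding \<phi>_def using complement_of_section_mult_right[OF rep_hom_carrier[OF g v]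
        rep_hom_carrier[OF \<sigma> v] fv ses_comp_zero[OF s v]] .
    then show ?thesis
      using assoc_mult_mat[OF L[OF v] rep_hom_carrier[OF \<phi> v] fv] Lf[OF v] by (simp add: r_def)
  qed
  with r show ?thesis unfolding ses_splits_def by blast
qed

definition zero_rep :: "('v,'a,'k::field) rep" where
  "zero_rep = (\<lambda>_. 0, \<lambda>_. 0\<^sub>m 0 0)"

lemma is_rep_zero_rep: "is_rep Q zero_rep"
  by (auto simp: is_rep_def zero_rep_def)

lemma rep_hom_from_zero_rep:
  assumes E: "is_rep Q E"
  shows "rep_hom Q zero_rep E (\<lambda>v. 0\<^sub>m (fst E v) 0)"
  unfolding rep_hom_def
proof (intro conjI ballI)
  fix a assume a: "a \<in> arrs Q"
  show "0\<^sub>m (fst E (tgt Q a)) 0 * snd zero_rep a = snd E a * 0\<^sub>m (fst E (src Q a)) 0"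
    using mult_carrier_mat[OF rep_arr_carrier[OF E a] zero_carrier_mat]
    by (intro mat_zero_cols_eq[of _ "fst E (tgt Q a)"]) (auto simp: zero_rep_def)
qed (simp add: zero_rep_def)

lemma projective_zero_rep: "projective_rep Q zero_rep"
  unfolding projective_rep_def
proof (intro conjI allI impI)
  fix E Z g h
  assume "is_rep Q E \<and> is_rep Q Z \<and> rep_hom Q E Z g \<and> hom_surj Q E Z g \<and> rep_hom Q zero_rep Z h"
  then have E: "is_rep Q E" and g: "rep_hom Q E Z g" and h: "rep_hom Q zero_rep Z h" by auto
  have "g v * 0\<^sub>m (fst E v) 0 = h v" if v: "v \<in> verts Q" for v
    using rep_hom_carrier[OF g v] rep_hom_carrier[OF h v]
    by (intro mat_zero_cols_eq[of _ "fst Z v"]) (auto simp: zero_rep_def)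
  with rep_hom_from_zero_rep[OF E] show "\<exists>l. rep_hom Q zero_rep E l \<and> (\<forall>v\<in>verts Q. g v * l v = h v)" by blast
qed (rule is_rep_zero_rep)

lemma ses_zero_rep:
  fixes P :: "('v,'a,'k::field) rep"
  assumes P: "is_rep Q P"
  shows "ses Q zero_rep P P (\<lambda>v. 0\<^sub>m (fst P v) 0) (\<lambda>v. 1\<^sub>m (fst P v))"
  unfolding ses_def
proof (intro conjI ballI)
  fix v and e :: "'k vec" assume "e \<in> carrier_vec (fst P v)"
  moreover have "0\<^sub>m (fst P v) 0 *\<^sub>v x = 0\<^sub>v (fst P v)" if "x \<in> carrier_vec 0" for x :: "'k vec"
    using that by (intro eq_vecI) (auto simp: scalar_prod_def)
  ultimately show "(1\<^sub>m (fst P v) *\<^sub>v e = 0\<^sub>v (fst P v)) =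
      (\<exists>x\<in>carrier_vec (fst zero_rep v). 0\<^sub>m (fst P v) 0 *\<^sub>v x = e)"
    by (auto simp: zero_rep_def intro: zero_carrier_vec)
next
  show "hom_inj Q zero_rep P (\<lambda>v. 0\<^sub>m (fst P v) 0)"
    by (auto simp: hom_inj_def zero_rep_def intro: eq_vecI)
  show "hom_surj Q P P (\<lambda>v. 1\<^sub>m (fst P v))"
    by (auto simp: hom_surj_def)
qed (simp_all add: is_rep_zero_rep P rep_hom_from_zero_rep rep_hom_id)

lemma ext_zero_projective:
  assumes fq: "finite_quiver Q"
  shows "projective_rep Q P \<Longrightarrow> ext_zero Q (Suc i) P C"
proof (induction i arbitrary: P)
  case 0
  then show ?case unfolding ext_zero.simps(2) using ses_splits_if_projective[OF fq] by blast
next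
  case (Suc i)
  then have "is_rep Q P" by (simp add: projective_rep_def)
  then show ?case
    using Suc.IH[OF projective_zero_rep] Suc.prems ses_zero_rep by (subst ext_zero.simps) blast
qed

lemma ses_splits_if_ext1_zero:
  assumes "ext_zero Q (Suc 0) X Y" and "ses Q Y E X f g"
  shows "ses_splits Q Y E f"
  using assms unfolding ext_zero.simps(2) by blast

definition injective_rep :: "('v,'a) quiver \<Rightarrow> ('v,'a,'k::field) rep \<Rightarrow> bool" where
  "injective_rep Q Y \<longleftrightarrow> (\<forall>E Z f g. ses Q Y E Z f g \<longrightarrow> ses_splits Q Y E f)"

text \<open>Vanishing of higher Ext is defined through the existence of a projective presentation,
  so the presentation has to be borrowed from a known vanishing Ext into some other Y'.\<close>
lemma ext_zero_injective:
  assumes Y: "injective_rep Q Y"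
  shows "ext_zero Q (Suc i) X Y' \<Longrightarrow> ext_zero Q (Suc i) X Y"
proof (induction i arbitrary: X)
  case 0
  show ?case using Y unfolding ext_zero.simps(2) injective_rep_def by blast
next
  case (Suc i)
  then show ?case by (subst ext_zero.simps) (metis ext_zero.simps(3))
qed

lemma cluster_tilting_eq:
  assumes "n_cluster_tilting Q n \<C>"
  shows "\<C> = {X. is_rep Q X \<and> (\<forall>i. 0 < i \<and> i < n \<longrightarrow> (\<forall>C\<in>\<C>. ext_zero Q i X C))}"
    and "\<C> = {X. is_rep Q X \<and> (\<forall>i. 0 < i \<and> i < n \<longrightarrow> (\<forall>C\<in>\<C>. ext_zero Q i C X))}"
  using assms unfolding n_cluster_tilting_def by (rule conjunct1[OF conjunct2], rule conjunct2[OF conjunct2])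

lemma cluster_tilting_ext_zero:
  fixes i :: nat
  assumes "n_cluster_tilting Q n \<C>" and "X \<in> \<C>" and "C \<in> \<C>" and "0 < i" and "i < n"
  shows "ext_zero Q i X C"
  using assms(2) by (subst (asm) cluster_tilting_eq(1)[OF assms(1)]) (use assms(3-5) in blast)

lemma cluster_tilting_memI_ext_from:
  assumes ct: "n_cluster_tilting Q n \<C>" and "is_rep Q X"
    and "\<And>i C. 0 < i \<Longrightarrow> i < n \<Longrightarrow> C \<in> \<C> \<Longrightarrow> ext_zero Q i X C"
  shows "X \<in> \<C>"
  by (subst cluster_tilting_eq(1)[OF ct]) (use assms(2,3) in blast)

lemma cluster_tilting_memI_ext_into:
  assumes ct: "n_cluster_tilting Q n \<C>" and "is_rep Q X"
    and "\<And>i C. 0 < i \<Longrightarrow> i < n \<Longrightarrow> C \<in> \<C> \<Longrightarrow> ext_zero Q i C X"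
  shows "X \<in> \<C>"
  by (subst cluster_tilting_eq(2)[OF ct]) (use assms(2,3) in blast)

lemma projective_in_cluster_tilting:
  assumes fq: "finite_quiver Q" and ct: "n_cluster_tilting Q n \<C>" and P: "projective_rep Q P"
  shows "P \<in> \<C>"
proof (rule cluster_tilting_memI_ext_from[OF ct])
  show "is_rep Q P" using P by (simp add: projective_rep_def)
  fix i :: nat and C assume "0 < i"
  then obtain j where "i = Suc j" by (cases i) auto
  then show "ext_zero Q i P C" using ext_zero_projective[OF fq P] by simp
qed

lemma injective_in_cluster_tilting:
  assumes ct: "n_cluster_tilting Q n \<C>" and D: "D \<in> \<C>" and I: "is_rep Q I" "injective_rep Q I"
  shows "I \<in> \<C>"
proof (rule cluster_tilting_memI_ext_into[OF ct I(1)])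
  fix i :: nat and C assume i: "0 < i" "i < n" and C: "C \<in> \<C>"
  then obtain j where j: "i = Suc j" by (cases i) auto
  then have "ext_zero Q (Suc j) C D" using cluster_tilting_ext_zero[OF ct C D] i by simp
  then show "ext_zero Q i C I" unfolding j by (rule ext_zero_injective[OF I(2)])
qed

section \<open>The indecomposable projective and injective modules of kQ/J^2\<close>

definition path_act :: "('v,'a,'k::field) rep \<Rightarrow> 'k vec \<Rightarrow> 'a option \<Rightarrow> 'k vec" where
  "path_act E e l = (case l of None \<Rightarrow> e | Some c \<Rightarrow> snd E c *\<^sub>v e)"

text \<open>A linear form on E(x) is stored as a vector; precomposing it with an arrow is multiplication
  by the transposed matrix.\<close>
definition copath_act :: "('v,'a,'k::field) rep \<Rightarrow> 'k vec \<Rightarrow> 'a option \<Rightarrow> 'k vec" where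
  "copath_act E \<phi> l = (case l of None \<Rightarrow> \<phi> | Some c \<Rightarrow> transpose_mat (snd E c) *\<^sub>v \<phi>)"

text \<open>An enumeration of the arrows fixes the order of the bases below.\<close>
locale enumerated_quiver =
  fixes Q :: "('v,'a) quiver" and arr_list :: "'a list"
  assumes finite_quiver: "finite_quiver Q"
    and set_arr_list: "set arr_list = arrs Q" and distinct_arr_list: "distinct arr_list"
begin

text \<open>The paths of length at most one from u to w, None standing for the trivial path.
  As paths of length two vanish in kQ/J^2, short_paths y w is a basis of P_y at w and
  short_paths u x a basis of the dual of I_x at u.\<close>
definition short_paths :: "'v \<Rightarrow> 'v \<Rightarrow> 'a option list" where
  "short_paths u w = (if u = w then [None] else []) @
     map Some (filter (\<lambda>a. src Q a = u \<and> tgt Q a = w) arr_list)"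

lemma distinct_short_paths: "distinct (short_paths u w)"
  using distinct_arr_list by (auto simp: short_paths_def distinct_map)

lemma set_short_paths: "set (short_paths u w) =
    (if u = w then {None} else {}) \<union> Some ` {a \<in> arrs Q. src Q a = u \<and> tgt Q a = w}"
  using set_arr_list by (auto simp: short_paths_def)

lemma arr_in_short_paths: "c \<in> arrs Q \<Longrightarrow> Some c \<in> set (short_paths (src Q c) (tgt Q c))"
  by (simp add: set_short_paths)

lemma short_paths_nth_None_iff:
  "j < length (short_paths u w) \<Longrightarrow> short_paths u w ! j = None \<longleftrightarrow> u = w \<and> j = 0"
  by (cases j) (auto simp: short_paths_def nth_append)

lemma short_paths_nth_Some:
  assumes "j < length (short_paths u w)" and "short_paths u w ! j = Some c"
  shows "c \<in> arrs Q" "src Q c = u" "tgt Q c = w"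
  using nth_mem[OF assms(1)] assms(2) by (auto simp: set_short_paths split: if_splits)

lemma short_paths_refl: "0 < length (short_paths u u)" "short_paths u u ! 0 = None"
  by (simp_all add: short_paths_def)

lemma short_paths_empty:
  "u \<in> verts Q \<Longrightarrow> w \<notin> verts Q \<Longrightarrow> short_paths u w = []"
  "u \<notin> verts Q \<Longrightarrow> w \<in> verts Q \<Longrightarrow> short_paths u w = []"
  using finite_quiver by (auto simp: finite_quiver_def short_paths_def filter_empty_conv set_arr_list)

definition proj_mat :: "'v \<Rightarrow> 'a \<Rightarrow> 'k::field mat" where
  "proj_mat y c = rel_mat (\<lambda>l l'. l' = None \<and> l = Some c) (short_paths y (tgt Q c)) (short_paths y (src Q c))"

definition inj_mat :: "'v \<Rightarrow> 'a \<Rightarrow> 'k::field mat" where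
  "inj_mat x c = rel_mat (\<lambda>l l'. l = None \<and> l' = Some c) (short_paths (tgt Q c) x) (short_paths (src Q c) x)"

definition proj_rep :: "'v \<Rightarrow> ('v,'a,'k::field) rep" where
  "proj_rep y = rep_of Q (\<lambda>w. length (short_paths y w)) (proj_mat y)"

definition inj_rep :: "'v \<Rightarrow> ('v,'a,'k::field) rep" where
  "inj_rep x = rep_of Q (\<lambda>u. length (short_paths u x)) (inj_mat x)"

lemma proj_mat_carrier[simp]:
  "proj_mat y c \<in> carrier_mat (length (short_paths y (tgt Q c))) (length (short_paths y (src Q c)))"
  by (simp add: proj_mat_def)

lemma dim_proj_mat[simp]:
  "dim_row (proj_mat y c) = length (short_paths y (tgt Q c))"
  "dim_col (proj_mat y c) = length (short_paths y (src Q c))"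
  by (simp_all add: proj_mat_def)

lemma dim_inj_mat[simp]:
  "dim_row (inj_mat x c) = length (short_paths (tgt Q c) x)"
  "dim_col (inj_mat x c) = length (short_paths (src Q c) x)"
  by (simp_all add: inj_mat_def)

lemma inj_mat_carrier[simp]:
  "inj_mat x c \<in> carrier_mat (length (short_paths (tgt Q c) x)) (length (short_paths (src Q c) x))"
  by (simp add: inj_mat_def)

lemma is_rep_proj_rep: "y \<in> verts Q \<Longrightarrow> is_rep Q (proj_rep y)"
  unfolding proj_rep_def
  by (rule is_rep_rep_of) (auto simp: short_paths_empty proj_mat_def intro: rel_mat_mult_eq_zero)

lemma is_rep_inj_rep: "x \<in> verts Q \<Longrightarrow> is_rep Q (inj_rep x)"
  unfolding inj_rep_def
  by (rule is_rep_rep_of) (auto simp: short_paths_empty inj_mat_def intro: rel_mat_mult_eq_zero)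

lemma col_proj_mat:
  assumes "j < length (short_paths y (src Q c))"
  shows "col (proj_mat y c) j = (if short_paths y (src Q c) ! j = None
    then label_vec (short_paths y (tgt Q c)) (Some c) else 0\<^sub>v (length (short_paths y (tgt Q c))))"
  using assms by (auto simp: proj_mat_def col_rel_mat label_vec_def)

lemma row_proj_mat:
  assumes "k < length (short_paths y (tgt Q c))"
  shows "row (proj_mat y c) k = (if short_paths y (tgt Q c) ! k = Some c \<and> src Q c = y
    then unit_vec (length (short_paths y (src Q c))) 0 else 0\<^sub>v (length (short_paths y (src Q c))))"
  using assms short_paths_nth_None_iff by (auto simp: proj_mat_def row_rel_mat unit_vec_def intro!: eq_vecI)

lemma row_inj_mat:
  assumes "i < length (short_paths (tgt Q c) x)"
  shows "row (inj_mat x c) i = (if short_paths (tgt Q c) x ! i = None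
    then label_vec (short_paths (src Q c) x) (Some c) else 0\<^sub>v (length (short_paths (src Q c) x)))"
  using assms by (auto simp: inj_mat_def row_rel_mat label_vec_def)

lemma fst_proj_rep[simp]: "fst (proj_rep y) w = length (short_paths y w)"
  and snd_proj_rep[simp]: "c \<in> arrs Q \<Longrightarrow> snd (proj_rep y) c = proj_mat y c"
  by (simp_all add: proj_rep_def)

lemma fst_inj_rep[simp]: "fst (inj_rep x) u = length (short_paths u x)"
  and snd_inj_rep[simp]: "c \<in> arrs Q \<Longrightarrow> snd (inj_rep x) c = inj_mat x c"
  by (simp_all add: inj_rep_def)

lemma proj_mat_mult_vec_index:
  assumes q: "q \<in> carrier_vec (length (short_paths y (src Q c)))" and k: "k < length (short_paths y (tgt Q c))"
  shows "(proj_mat y c *\<^sub>v q) $ k = (if short_paths y (tgt Q c) ! k = Some c \<and> src Q c = y then q $ 0 else 0)"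
  using q k short_paths_refl[of y] by (cases "src Q c = y") (auto simp: row_proj_mat[OF k])

lemma proj_mat_mult_vec_carrier[simp]:
  "q \<in> carrier_vec (length (short_paths y (src Q c))) \<Longrightarrow>
    proj_mat y c *\<^sub>v q \<in> carrier_vec (length (short_paths y (tgt Q c)))"
  by (rule mult_mat_vec_carrier[OF proj_mat_carrier])

lemma inj_mat_mult_vec_carrier[simp]:
  "q \<in> carrier_vec (length (short_paths (src Q c) x)) \<Longrightarrow>
    inj_mat x c *\<^sub>v q \<in> carrier_vec (length (short_paths (tgt Q c) x))"
  by (rule mult_mat_vec_carrier[OF inj_mat_carrier])

lemma inj_mat_mult_label_vec:
  assumes "Some b \<in> set (short_paths (src Q c) x)"
  shows "inj_mat x c *\<^sub>v label_vec (short_paths (src Q c) x) (Some b) =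
    (if b = c then label_vec (short_paths (tgt Q c) x) None else 0\<^sub>v (length (short_paths (tgt Q c) x)))"
  unfolding inj_mat_def rel_mat_mult_label_vec[OF distinct_short_paths assms]
  by (auto simp: label_vec_def intro!: eq_vecI)

definition hom_from_proj :: "('v,'a,'k::field) rep \<Rightarrow> 'v \<Rightarrow> 'k vec \<Rightarrow> 'v \<Rightarrow> 'k mat" where
  "hom_from_proj E y e w = mat_of_cols (fst E w) (map (path_act E e) (short_paths y w))"

lemma hom_from_proj_carrier: "hom_from_proj E y e w \<in> carrier_mat (fst E w) (length (short_paths y w))"
  unfolding hom_from_proj_def by (metis length_map mat_of_cols_carrier(1))

lemma path_act_carrier:
  fixes E :: "('v,'a,'k::field) rep"
  assumes E: "is_rep Q E" and e: "e \<in> carrier_vec (fst E y)" and l: "l \<in> set (short_paths y w)"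
  shows "path_act E e l \<in> carrier_vec (fst E w)"
proof (cases l)
  case (Some c)
  then have c: "c \<in> arrs Q" "src Q c = y" "tgt Q c = w"
    using l by (auto simp: set_short_paths split: if_splits)
  then show ?thesis
    using Some mult_mat_vec_carrier[OF rep_arr_carrier[OF E c(1)]] e by (simp add: path_act_def)
qed (use l e in \<open>auto simp: path_act_def set_short_paths split: if_splits\<close>)

lemma col_hom_from_proj:
  fixes E :: "('v,'a,'k::field) rep"
  assumes E: "is_rep Q E" and e: "e \<in> carrier_vec (fst E y)" and j: "j < length (short_paths y w)"
  shows "col (hom_from_proj E y e w) j = path_act E e (short_paths y w ! j)"
  using path_act_carrier[OF E e nth_mem[OF j]] j by (simp add: hom_from_proj_def)

lemma hom_from_proj_mult_label_vec:
  fixes E :: "('v,'a,'k::field) rep"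
  assumes E: "is_rep Q E" and e: "e \<in> carrier_vec (fst E y)" and l: "l \<in> set (short_paths y w)"
  shows "hom_from_proj E y e w *\<^sub>v label_vec (short_paths y w) l = path_act E e l"
proof -
  obtain j where j: "j < length (short_paths y w)" "short_paths y w ! j = l"
    using l by (auto simp: in_set_conv_nth)
  have "label_vec (short_paths y w) l = (unit_vec (length (short_paths y w)) j :: 'k vec)"
    using label_vec_nth[OF distinct_short_paths j(1)] j(2) by simp
  then show ?thesis
    using mult_mat_vec_unit[OF hom_from_proj_carrier[of E y e w] j(1)] col_hom_from_proj[OF E e j(1)] j(2)
    by simp
qed

text \<open>The relations of kQ/J^2 enter here: an arrow c' followed by c acts as zero.\<close>
lemma hom_from_proj_mult_col_proj_mat:
  fixes E :: "('v,'a,'k::field) rep"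
  assumes E: "is_rep Q E" and e: "e \<in> carrier_vec (fst E y)" and c: "c \<in> arrs Q"
    and j: "j < length (short_paths y (src Q c))"
  shows "hom_from_proj E y e (tgt Q c) *\<^sub>v col (proj_mat y c) j
    = snd E c *\<^sub>v path_act E e (short_paths y (src Q c) ! j)"
proof (cases "short_paths y (src Q c) ! j")
  case None
  then have "src Q c = y" using short_paths_nth_None_iff[OF j] by simp
  then have c_path: "Some c \<in> set (short_paths y (tgt Q c))" using arr_in_short_paths[OF c] by simp
  have "hom_from_proj E y e (tgt Q c) *\<^sub>v col (proj_mat y c) j
      = hom_from_proj E y e (tgt Q c) *\<^sub>v label_vec (short_paths y (tgt Q c)) (Some c)"
    using None by (simp add: col_proj_mat[OF j])
  also have "\<dots> = snd E c *\<^sub>v e"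
    using hom_from_proj_mult_label_vec[OF E e c_path] by (simp add: path_act_def)
  finally show ?thesis using None by (simp add: path_act_def)
next
  case (Some c')
  note c' = short_paths_nth_Some[OF j Some]
  have "snd E c *\<^sub>v (snd E c' *\<^sub>v e) = (snd E c * snd E c') *\<^sub>v e"
    using rep_arr_carrier[OF E c] rep_arr_carrier[OF E c'(1)] c' e by simp
  also have "\<dots> = 0\<^sub>v (fst E (tgt Q c))"
    using E c c' e unfolding is_rep_def by auto
  finally show ?thesis
    using Some hom_from_proj_carrier[of E y e "tgt Q c"] by (auto simp: path_act_def col_proj_mat[OF j])
qed

lemma rep_hom_hom_from_proj:
  fixes E :: "('v,'a,'k::field) rep"
  assumes E: "is_rep Q E" and e: "e \<in> carrier_vec (fst E y)"
  shows "rep_hom Q (proj_rep y) E (hom_from_proj E y e)"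
  unfolding rep_hom_def
proof (intro conjI ballI)
  fix c assume c: "c \<in> arrs Q"
  note Ec = rep_arr_carrier[OF E c]
  show "hom_from_proj E y e (tgt Q c) * snd (proj_rep y) c = snd E c * hom_from_proj E y e (src Q c)"
  proof (rule mat_col_eqI)
    fix j assume "j < dim_col (snd E c * hom_from_proj E y e (src Q c))"
    then have j: "j < length (short_paths y (src Q c))" by (simp add: hom_from_proj_def)
    have "col (hom_from_proj E y e (tgt Q c) * snd (proj_rep y) c) j
        = hom_from_proj E y e (tgt Q c) *\<^sub>v col (proj_mat y c) j"
      using c j by (simp add: col_mult2[OF hom_from_proj_carrier proj_mat_carrier])
    also have "\<dots> = col (snd E c * hom_from_proj E y e (src Q c)) j"
      using col_mult2[OF Ec hom_from_proj_carrier j] col_hom_from_proj[OF E e j]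
        hom_from_proj_mult_col_proj_mat[OF E e c j] by simp
    finally show "col (hom_from_proj E y e (tgt Q c) * snd (proj_rep y) c) j
        = col (snd E c * hom_from_proj E y e (src Q c)) j" .
  qed (use c Ec in \<open>simp_all add: hom_from_proj_def\<close>)
qed (simp add: hom_from_proj_carrier)

lemma hom_from_proj_comp:
  fixes E Z :: "('v,'a,'k::field) rep"
  assumes y: "y \<in> verts Q" and E: "is_rep Q E" and Z: "is_rep Q Z" and g: "rep_hom Q E Z g"
    and e: "e \<in> carrier_vec (fst E y)" and w: "w \<in> verts Q"
  shows "g w * hom_from_proj E y e w = hom_from_proj Z y (g y *\<^sub>v e) w"
proof (rule mat_col_eqI)
  note gy = rep_hom_carrier[OF g y] and gw = rep_hom_carrier[OF g w]
  have ge: "g y *\<^sub>v e \<in> carrier_vec (fst Z y)" using gy e by simp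
  fix j assume "j < dim_col (hom_from_proj Z y (g y *\<^sub>v e) w)"
  then have j: "j < length (short_paths y w)" by (simp add: hom_from_proj_def)
  have "g w *\<^sub>v path_act E e (short_paths y w ! j) = path_act Z (g y *\<^sub>v e) (short_paths y w ! j)"
  proof (cases "short_paths y w ! j")
    case (Some c)
    note c = short_paths_nth_Some[OF j Some]
    have "g w *\<^sub>v (snd E c *\<^sub>v e) = (g (tgt Q c) * snd E c) *\<^sub>v e"
      using gw rep_arr_carrier[OF E c(1)] c e by simp
    also have "\<dots> = snd Z c *\<^sub>v (g y *\<^sub>v e)"
      using rep_hom_arr[OF g c(1)] rep_arr_carrier[OF Z c(1)] gy c e by simp
    finally show ?thesis using Some by (simp add: path_act_def)
  qed (use short_paths_nth_None_iff[OF j] in \<open>simp add: path_act_def\<close>)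
  then show "col (g w * hom_from_proj E y e w) j = col (hom_from_proj Z y (g y *\<^sub>v e) w) j"
    using col_mult2[OF gw hom_from_proj_carrier j] col_hom_from_proj[OF E e j] col_hom_from_proj[OF Z ge j]
    by simp
qed (use rep_hom_carrier[OF g w] in \<open>simp_all add: hom_from_proj_def\<close>)

lemma hom_from_proj_unique:
  fixes Z :: "('v,'a,'k::field) rep"
  assumes y: "y \<in> verts Q" and Z: "is_rep Q Z" and h: "rep_hom Q (proj_rep y) Z h" and w: "w \<in> verts Q"
  shows "h w = hom_from_proj Z y (col (h y) 0) w"
proof (rule mat_col_eqI)
  note hy = rep_hom_carrier[OF h y, simplified] and hw = rep_hom_carrier[OF h w, simplified]
  have hy0: "col (h y) 0 \<in> carrier_vec (fst Z y)" using hy by (metis carrier_matD(1) col_dim)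
  fix j assume "j < dim_col (hom_from_proj Z y (col (h y) 0) w)"
  then have j: "j < length (short_paths y w)" by (simp add: hom_from_proj_def)
  have "col (h w) j = path_act Z (col (h y) 0) (short_paths y w ! j)"
  proof (cases "short_paths y w ! j")
    case (Some c)
    note c = short_paths_nth_Some[OF j Some]
    have "(col (proj_mat y c) 0 :: 'k vec) = label_vec (short_paths y w) (short_paths y w ! j)"
      using short_paths_refl[of y] c Some by (simp add: col_proj_mat)
    also have "\<dots> = unit_vec (length (short_paths y w)) j" by (rule label_vec_nth[OF distinct_short_paths j])
    finally have "col (h w) j = h w *\<^sub>v col (proj_mat y c) 0" using mult_mat_vec_unit[OF hw j] by simp
    also have "\<dots> = col (snd Z c * h y) 0"
      using rep_hom_arr[OF h c(1)] c short_paths_refl[of y] col_mult2[OF hw proj_mat_carrier[of y c, unfolded c(2,3)]]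
      by simp
    also have "\<dots> = snd Z c *\<^sub>v col (h y) 0"
      using col_mult2[OF rep_arr_carrier[OF Z c(1), unfolded c(2,3)] hy] short_paths_refl[of y] by simp
    finally show ?thesis using Some by (simp add: path_act_def)
  qed (use short_paths_nth_None_iff[OF j] in \<open>simp add: path_act_def\<close>)
  then show "col (h w) j = col (hom_from_proj Z y (col (h y) 0) w) j"
    using col_hom_from_proj[OF Z hy0 j] by simp
qed (use rep_hom_carrier[OF h w] in \<open>simp_all add: hom_from_proj_def\<close>)

lemma projective_proj_rep:
  assumes y: "y \<in> verts Q"
  shows "projective_rep Q (proj_rep y)"
  unfolding projective_rep_def
proof (intro conjI allI impI)
  fix E Z g h
  assume "is_rep Q E \<and> is_rep Q Z \<and> rep_hom Q E Z g \<and> hom_surj Q E Z g \<and> rep_hom Q (proj_rep y) Z h"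
  then have E: "is_rep Q E" and Z: "is_rep Q Z" and g: "rep_hom Q E Z g" and g_surj: "hom_surj Q E Z g"
    and h: "rep_hom Q (proj_rep y) Z h" by auto
  have "col (h y) 0 \<in> carrier_vec (fst Z y)" using rep_hom_carrier[OF h y] by (metis carrier_matD(1) col_dim)
  then obtain e where e: "e \<in> carrier_vec (fst E y)" and ge: "g y *\<^sub>v e = col (h y) 0"
    using g_surj y unfolding hom_surj_def by blast
  have "\<forall>w\<in>verts Q. g w * hom_from_proj E y e w = h w"
    using hom_from_proj_comp[OF y E Z g e] hom_from_proj_unique[OF y Z h] ge by simp
  with rep_hom_hom_from_proj[OF E e]
  show "\<exists>l. rep_hom Q (proj_rep y) E l \<and> (\<forall>w\<in>verts Q. g w * l w = h w)" by blast
qed (rule is_rep_proj_rep[OF y])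

definition hom_to_inj :: "('v,'a,'k::field) rep \<Rightarrow> 'v \<Rightarrow> 'k vec \<Rightarrow> 'v \<Rightarrow> 'k mat" where
  "hom_to_inj E x \<phi> u = mat_of_rows (fst E u) (map (copath_act E \<phi>) (short_paths u x))"

lemma hom_to_inj_carrier: "hom_to_inj E x \<phi> u \<in> carrier_mat (length (short_paths u x)) (fst E u)"
  unfolding hom_to_inj_def by (metis length_map mat_of_rows_carrier(1))

lemma copath_act_carrier:
  fixes E :: "('v,'a,'k::field) rep"
  assumes E: "is_rep Q E" and \<phi>: "\<phi> \<in> carrier_vec (fst E x)" and l: "l \<in> set (short_paths u x)"
  shows "copath_act E \<phi> l \<in> carrier_vec (fst E u)"
proof (cases l)
  case (Some c)
  then have c: "c \<in> arrs Q" "src Q c = u" "tgt Q c = x"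
    using l by (auto simp: set_short_paths split: if_splits)
  then show ?thesis
    using Some rep_arr_carrier[OF E c(1)] \<phi> by (simp add: copath_act_def)
qed (use l \<phi> in \<open>auto simp: copath_act_def set_short_paths split: if_splits\<close>)

lemma row_hom_to_inj:
  fixes E :: "('v,'a,'k::field) rep"
  assumes E: "is_rep Q E" and \<phi>: "\<phi> \<in> carrier_vec (fst E x)" and i: "i < length (short_paths u x)"
  shows "row (hom_to_inj E x \<phi> u) i = copath_act E \<phi> (short_paths u x ! i)"
  using copath_act_carrier[OF E \<phi> nth_mem[OF i]] i by (simp add: hom_to_inj_def)

lemma transpose_hom_to_inj_mult_label_vec:
  fixes E :: "('v,'a,'k::field) rep"
  assumes E: "is_rep Q E" and \<phi>: "\<phi> \<in> carrier_vec (fst E x)" and l: "l \<in> set (short_paths u x)"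
  shows "transpose_mat (hom_to_inj E x \<phi> u) *\<^sub>v label_vec (short_paths u x) l = copath_act E \<phi> l"
proof -
  obtain i where i: "i < length (short_paths u x)" "short_paths u x ! i = l"
    using l by (auto simp: in_set_conv_nth)
  have "label_vec (short_paths u x) l = (unit_vec (length (short_paths u x)) i :: 'k vec)"
    using label_vec_nth[OF distinct_short_paths i(1)] i(2) by simp
  then show ?thesis
    using transpose_mult_vec_unit[OF hom_to_inj_carrier[of E x \<phi> u] i(1)] row_hom_to_inj[OF E \<phi> i(1)] i(2)
    by simp
qed

lemma transpose_hom_to_inj_mult_row_inj_mat:
  fixes E :: "('v,'a,'k::field) rep"
  assumes E: "is_rep Q E" and \<phi>: "\<phi> \<in> carrier_vec (fst E x)" and c: "c \<in> arrs Q"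
    and i: "i < length (short_paths (tgt Q c) x)"
  shows "transpose_mat (hom_to_inj E x \<phi> (src Q c)) *\<^sub>v row (inj_mat x c) i
    = transpose_mat (snd E c) *\<^sub>v copath_act E \<phi> (short_paths (tgt Q c) x ! i)"
proof (cases "short_paths (tgt Q c) x ! i")
  case None
  then have "tgt Q c = x" using short_paths_nth_None_iff[OF i] by simp
  then have c_path: "Some c \<in> set (short_paths (src Q c) x)" using arr_in_short_paths[OF c] by simp
  have "transpose_mat (hom_to_inj E x \<phi> (src Q c)) *\<^sub>v row (inj_mat x c) i
      = transpose_mat (hom_to_inj E x \<phi> (src Q c)) *\<^sub>v label_vec (short_paths (src Q c) x) (Some c)"
    using None by (simp add: row_inj_mat[OF i])
  also have "\<dots> = transpose_mat (snd E c) *\<^sub>v \<phi>"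
    using transpose_hom_to_inj_mult_label_vec[OF E \<phi> c_path] by (simp add: copath_act_def)
  finally show ?thesis using None by (simp add: copath_act_def)
next
  case (Some c')
  note c' = short_paths_nth_Some[OF i Some]
  note Ec = rep_arr_carrier[OF E c] and Ec' = rep_arr_carrier[OF E c'(1)]
  have "transpose_mat (snd E c) *\<^sub>v (transpose_mat (snd E c') *\<^sub>v \<phi>)
      = transpose_mat (snd E c' * snd E c) *\<^sub>v \<phi>"
    using Ec Ec' c' \<phi> by (simp add: transpose_mult[OF Ec'[unfolded c'(2)] Ec])
  also have "\<dots> = 0\<^sub>v (fst E (src Q c))"
    using E c c' \<phi> unfolding is_rep_def by auto
  finally show ?thesis
    using Some hom_to_inj_carrier[of E x \<phi> "src Q c"] by (auto simp: copath_act_def row_inj_mat[OF i])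
qed

lemma rep_hom_hom_to_inj:
  fixes E :: "('v,'a,'k::field) rep"
  assumes E: "is_rep Q E" and \<phi>: "\<phi> \<in> carrier_vec (fst E x)"
  shows "rep_hom Q E (inj_rep x) (hom_to_inj E x \<phi>)"
  unfolding rep_hom_def
proof (intro conjI ballI)
  fix c assume c: "c \<in> arrs Q"
  note Ec = rep_arr_carrier[OF E c]
  show "hom_to_inj E x \<phi> (tgt Q c) * snd E c = snd (inj_rep x) c * hom_to_inj E x \<phi> (src Q c)"
  proof (rule eq_rowI)
    fix i assume "i < dim_row (snd (inj_rep x) c * hom_to_inj E x \<phi> (src Q c))"
    then have i: "i < length (short_paths (tgt Q c) x)" using c by simp
    have "row (hom_to_inj E x \<phi> (tgt Q c) * snd E c) i
        = transpose_mat (snd E c) *\<^sub>v copath_act E \<phi> (short_paths (tgt Q c) x ! i)"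
      using row_mult_as_transpose[OF hom_to_inj_carrier Ec i] row_hom_to_inj[OF E \<phi> i] by simp
    also have "\<dots> = row (snd (inj_rep x) c * hom_to_inj E x \<phi> (src Q c)) i"
      using c row_mult_as_transpose[OF inj_mat_carrier hom_to_inj_carrier[of E x \<phi> "src Q c"] i]
        transpose_hom_to_inj_mult_row_inj_mat[OF E \<phi> c i] by simp
    finally show "row (hom_to_inj E x \<phi> (tgt Q c) * snd E c) i
        = row (snd (inj_rep x) c * hom_to_inj E x \<phi> (src Q c)) i" .
  qed (use c Ec in \<open>simp_all add: hom_to_inj_def\<close>)
qed (simp add: hom_to_inj_carrier)

lemma hom_to_inj_comp:
  fixes E Z :: "('v,'a,'k::field) rep"
  assumes x: "x \<in> verts Q" and E: "is_rep Q E" and Z: "is_rep Q Z" and f: "rep_hom Q Z E f"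
    and \<phi>: "\<phi> \<in> carrier_vec (fst E x)" and u: "u \<in> verts Q"
  shows "hom_to_inj E x \<phi> u * f u = hom_to_inj Z x (transpose_mat (f x) *\<^sub>v \<phi>) u"
proof (rule eq_rowI)
  note fx = rep_hom_carrier[OF f x] and fu = rep_hom_carrier[OF f u]
  have f\<phi>: "transpose_mat (f x) *\<^sub>v \<phi> \<in> carrier_vec (fst Z x)" using fx \<phi> by simp
  fix i assume "i < dim_row (hom_to_inj Z x (transpose_mat (f x) *\<^sub>v \<phi>) u)"
  then have i: "i < length (short_paths u x)" by (simp add: hom_to_inj_def)
  have "transpose_mat (f u) *\<^sub>v copath_act E \<phi> (short_paths u x ! i)
      = copath_act Z (transpose_mat (f x) *\<^sub>v \<phi>) (short_paths u x ! i)"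
  proof (cases "short_paths u x ! i")
    case (Some c)
    note c = short_paths_nth_Some[OF i Some]
    note Ec = rep_arr_carrier[OF E c(1), unfolded c(2,3)] and Zc = rep_arr_carrier[OF Z c(1), unfolded c(2,3)]
    have "transpose_mat (f u) *\<^sub>v (transpose_mat (snd E c) *\<^sub>v \<phi>) = transpose_mat (snd E c * f u) *\<^sub>v \<phi>"
      using fu Ec \<phi> by (simp add: transpose_mult[OF Ec fu])
    also have "\<dots> = transpose_mat (f x * snd Z c) *\<^sub>v \<phi>" using rep_hom_arr[OF f c(1)] c by simp
    also have "\<dots> = transpose_mat (snd Z c) *\<^sub>v (transpose_mat (f x) *\<^sub>v \<phi>)"
      using fx Zc \<phi> by (simp add: transpose_mult[OF fx Zc])
    finally show ?thesis using Some by (simp add: copath_act_def)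
  qed (use short_paths_nth_None_iff[OF i] in \<open>simp add: copath_act_def\<close>)
  then show "row (hom_to_inj E x \<phi> u * f u) i = row (hom_to_inj Z x (transpose_mat (f x) *\<^sub>v \<phi>) u) i"
    using row_mult_as_transpose[OF hom_to_inj_carrier fu i] row_hom_to_inj[OF E \<phi> i]
      row_hom_to_inj[OF Z f\<phi> i] by simp
qed (use rep_hom_carrier[OF f u] in \<open>simp_all add: hom_to_inj_def\<close>)

lemma hom_to_inj_unique:
  fixes Z :: "('v,'a,'k::field) rep"
  assumes x: "x \<in> verts Q" and Z: "is_rep Q Z" and h: "rep_hom Q Z (inj_rep x) h" and u: "u \<in> verts Q"
  shows "h u = hom_to_inj Z x (row (h x) 0) u"
proof (rule eq_rowI)
  note hx = rep_hom_carrier[OF h x, simplified] and hu = rep_hom_carrier[OF h u, simplified]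
  have hx0: "row (h x) 0 \<in> carrier_vec (fst Z x)" using hx by (metis carrier_matD(2) row_carrier)
  fix i assume "i < dim_row (hom_to_inj Z x (row (h x) 0) u)"
  then have i: "i < length (short_paths u x)" by (simp add: hom_to_inj_def)
  have "row (h u) i = copath_act Z (row (h x) 0) (short_paths u x ! i)"
  proof (cases "short_paths u x ! i")
    case (Some c)
    note c = short_paths_nth_Some[OF i Some]
    have "(row (inj_mat x c) 0 :: 'k vec) = label_vec (short_paths u x) (short_paths u x ! i)"
      using short_paths_refl[of x] c Some by (simp add: row_inj_mat)
    also have "\<dots> = unit_vec (length (short_paths u x)) i" by (rule label_vec_nth[OF distinct_short_paths i])
    finally have "row (h u) i = transpose_mat (h u) *\<^sub>v row (inj_mat x c) 0"
      using transpose_mult_vec_unit[OF hu i] by simp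
    also have "\<dots> = row (h x * snd Z c) 0"
      using rep_hom_arr[OF h c(1)] c short_paths_refl[of x]
        row_mult_as_transpose[OF inj_mat_carrier[of x c, unfolded c(2,3)] hu] by simp
    also have "\<dots> = transpose_mat (snd Z c) *\<^sub>v row (h x) 0"
      using row_mult_as_transpose[OF hx rep_arr_carrier[OF Z c(1), unfolded c(2,3)]] short_paths_refl[of x]
      by simp
    finally show ?thesis using Some by (simp add: copath_act_def)
  qed (use short_paths_nth_None_iff[OF i] in \<open>simp add: copath_act_def\<close>)
  then show "row (h u) i = row (hom_to_inj Z x (row (h x) 0) u) i"
    using row_hom_to_inj[OF Z hx0 i] by simp
qed (use rep_hom_carrier[OF h u] in \<open>simp_all add: hom_to_inj_def\<close>)

lemma injective_inj_rep:
  assumes x: "x \<in> verts Q"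
  shows "injective_rep Q (inj_rep x :: ('v,'a,'k::field) rep)"
  unfolding injective_rep_def
proof (intro allI impI)
  fix E Z :: "('v,'a,'k) rep" and f g assume "ses Q (inj_rep x) E Z f g"
  then have I: "is_rep Q (inj_rep x :: ('v,'a,'k) rep)" and E: "is_rep Q E"
    and f: "rep_hom Q (inj_rep x) E f" and f_inj: "hom_inj Q (inj_rep x) E f"
    unfolding ses_def by auto
  obtain L where L: "L \<in> carrier_mat (length (short_paths x x)) (fst E x)"
    and Lf: "L * f x = 1\<^sub>m (length (short_paths x x))"
    using hom_inj_left_inverse[OF f f_inj x] by auto
  define \<phi> where "\<phi> = row L 0"
  have \<phi>: "\<phi> \<in> carrier_vec (fst E x)" using L by (metis \<phi>_def carrier_matD(2) row_carrier)
  have "transpose_mat (f x) *\<^sub>v \<phi> = row (1\<^sub>m (fst (inj_rep x) x)) 0"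
    using row_mult_as_transpose[OF L rep_hom_carrier[OF f x, simplified] short_paths_refl(1)] Lf
    by (simp add: \<phi>_def)
  then have "hom_to_inj E x \<phi> u * f u = 1\<^sub>m (fst (inj_rep x) u)" if u: "u \<in> verts Q" for u
    using hom_to_inj_comp[OF x E I f \<phi> u] hom_to_inj_unique[OF x I rep_hom_id[OF I] u] by simp
  with rep_hom_hom_to_inj[OF E \<phi>] show "ses_splits Q (inj_rep x) E f"
    unfolding ses_splits_def by blast
qed

end

section \<open>A non-split extension of I_x by P_y\<close>

text \<open>ext_rep c0 \<beta> \<gamma> has E(w) = P_y(w) \<oplus> I_x(w); besides acting diagonally, the arrow c0 sends the
  coordinate of I_x dual to the arrow \<beta> to the path \<gamma> of P_y.\<close>
locale glued_extension = enumerated_quiver Q arr_list for Q :: "('v,'a) quiver" and arr_list +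
  fixes y x :: 'v
  assumes y_vert: "y \<in> verts Q" and x_vert: "x \<in> verts Q"
begin

abbreviation "dP w \<equiv> length (short_paths y w)"
abbreviation "dI w \<equiv> length (short_paths w x)"

definition glue_mat :: "'a \<Rightarrow> 'a \<Rightarrow> 'a \<Rightarrow> 'a \<Rightarrow> 'k::field mat" where
  "glue_mat c0 \<beta> \<gamma> c = rel_mat (\<lambda>l l'. c = c0 \<and> l' = Some \<beta> \<and> l = Some \<gamma>) (short_paths y (tgt Q c)) (short_paths (src Q c) x)"

definition ext_mat :: "'a \<Rightarrow> 'a \<Rightarrow> 'a \<Rightarrow> 'a \<Rightarrow> 'k::field mat" where
  "ext_mat c0 \<beta> \<gamma> c = four_block_mat (proj_mat y c) (glue_mat c0 \<beta> \<gamma> c) (0\<^sub>m (dI (tgt Q c)) (dP (src Q c))) (inj_mat x c)"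

definition ext_rep :: "'a \<Rightarrow> 'a \<Rightarrow> 'a \<Rightarrow> ('v,'a,'k::field) rep" where
  "ext_rep c0 \<beta> \<gamma> = rep_of Q (\<lambda>w. dP w + dI w) (ext_mat c0 \<beta> \<gamma>)"

definition ext_incl :: "'v \<Rightarrow> 'k::field mat" where
  "ext_incl w = mat (dP w + dI w) (dP w) (\<lambda>(i,j). if i = j then 1 else 0)"

definition ext_proj :: "'v \<Rightarrow> 'k::field mat" where
  "ext_proj w = mat (dI w) (dP w + dI w) (\<lambda>(i,j). if j = dP w + i then 1 else 0)"

lemma glue_mat_carrier[simp]: "glue_mat c0 \<beta> \<gamma> c \<in> carrier_mat (dP (tgt Q c)) (dI (src Q c))"
  and dim_glue_mat[simp]: "dim_row (glue_mat c0 \<beta> \<gamma> c) = dP (tgt Q c)" "dim_col (glue_mat c0 \<beta> \<gamma> c) = dI (src Q c)"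
  by (simp_all add: glue_mat_def)

lemma ext_mat_carrier[simp]:
  "ext_mat c0 \<beta> \<gamma> c \<in> carrier_mat (dP (tgt Q c) + dI (tgt Q c)) (dP (src Q c) + dI (src Q c))"
  unfolding ext_mat_def by (rule four_block_carrier_mat) simp_all

lemma fst_ext_rep[simp]: "fst (ext_rep c0 \<beta> \<gamma>) w = dP w + dI w"
  and snd_ext_rep[simp]: "c \<in> arrs Q \<Longrightarrow> snd (ext_rep c0 \<beta> \<gamma>) c = ext_mat c0 \<beta> \<gamma> c"
  by (simp_all add: ext_rep_def)

lemma ext_incl_carrier[simp]: "ext_incl w \<in> carrier_mat (dP w + dI w) (dP w)"
  by (simp add: ext_incl_def)

lemma ext_proj_carrier[simp]: "ext_proj w \<in> carrier_mat (dI w) (dP w + dI w)"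
  by (simp add: ext_proj_def)

lemma glue_mat_mult_vec_carrier[simp]:
  "d \<in> carrier_vec (dI (src Q c)) \<Longrightarrow> glue_mat c0 \<beta> \<gamma> c *\<^sub>v d \<in> carrier_vec (dP (tgt Q c))"
  by (rule mult_mat_vec_carrier[OF glue_mat_carrier])

lemma ext_incl_mult_vec:
  assumes p: "p \<in> carrier_vec (dP w)"
  shows "(ext_incl w :: 'k::field mat) *\<^sub>v p = p @\<^sub>v 0\<^sub>v (dI w)"
proof (rule eq_vecI)
  fix i assume "i < dim_vec (p @\<^sub>v 0\<^sub>v (dI w))"
  then have i: "i < dP w + dI w" using p by simp
  have "(ext_incl w *\<^sub>v p) $ i = (\<Sum>j<dP w. (if i = j then 1 else 0) * p $ j)"
    using i p by (simp add: ext_incl_def scalar_prod_def lessThan_atLeast0)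
  also have "\<dots> = (\<Sum>j<dP w. if j = i then p $ j else 0)" by (rule sum.cong) auto
  also have "\<dots> = (p @\<^sub>v 0\<^sub>v (dI w)) $ i" using i p by (simp add: sum.delta)
  finally show "(ext_incl w *\<^sub>v p) $ i = (p @\<^sub>v 0\<^sub>v (dI w)) $ i" .
qed (use p in \<open>simp add: ext_incl_def\<close>)

lemma ext_proj_mult_vec:
  assumes a: "a \<in> carrier_vec (dP w)" and d: "d \<in> carrier_vec (dI w)"
  shows "(ext_proj w :: 'k::field mat) *\<^sub>v (a @\<^sub>v d) = d"
proof (rule eq_vecI)
  fix i assume "i < dim_vec d"
  then have i: "i < dI w" using d by simp
  have "(ext_proj w *\<^sub>v (a @\<^sub>v d)) $ i = (\<Sum>j<dP w + dI w. (if j = dP w + i then 1 else 0) * (a @\<^sub>v d) $ j)"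
    using i a d by (simp add: ext_proj_def scalar_prod_def lessThan_atLeast0)
  also have "\<dots> = (\<Sum>j<dP w + dI w. if j = dP w + i then (a @\<^sub>v d) $ j else 0)" by (rule sum.cong) auto
  also have "\<dots> = d $ i" using i a d by (simp add: sum.delta)
  finally show "(ext_proj w *\<^sub>v (a @\<^sub>v d)) $ i = d $ i" .
qed (use d in \<open>simp add: ext_proj_def\<close>)

lemma ext_mat_mult_vec:
  assumes a: "a \<in> carrier_vec (dP (src Q c))" and d: "d \<in> carrier_vec (dI (src Q c))"
  shows "(ext_mat c0 \<beta> \<gamma> c :: 'k::field mat) *\<^sub>v (a @\<^sub>v d) = (proj_mat y c *\<^sub>v a + glue_mat c0 \<beta> \<gamma> c *\<^sub>v d) @\<^sub>v (inj_mat x c *\<^sub>v d)"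
  unfolding ext_mat_def by (rule four_block_upper_mult_vec[OF proj_mat_carrier glue_mat_carrier inj_mat_carrier a d])

lemma is_rep_ext_rep: "is_rep Q (ext_rep c0 \<beta> \<gamma> :: ('v,'a,'k::field) rep)"
  unfolding ext_rep_def
proof (rule is_rep_rep_of)
  fix a b assume a: "a \<in> arrs Q" and b: "b \<in> arrs Q" and ab: "src Q b = tgt Q a"
  have "proj_mat y b * proj_mat y a = (0\<^sub>m (dP (tgt Q b)) (dP (src Q a)) :: 'k mat)"
    unfolding proj_mat_def ab by (rule rel_mat_mult_eq_zero) auto
  moreover have "proj_mat y b * glue_mat c0 \<beta> \<gamma> a + glue_mat c0 \<beta> \<gamma> b * inj_mat x a
      = (0\<^sub>m (dP (tgt Q b)) (dI (src Q a)) :: 'k mat)"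
  proof -
    have "proj_mat y b * glue_mat c0 \<beta> \<gamma> a = (0\<^sub>m (dP (tgt Q b)) (dI (src Q a)) :: 'k mat)"
      unfolding proj_mat_def glue_mat_def ab by (rule rel_mat_mult_eq_zero) auto
    moreover have "glue_mat c0 \<beta> \<gamma> b * inj_mat x a = (0\<^sub>m (dP (tgt Q b)) (dI (src Q a)) :: 'k mat)"
      unfolding inj_mat_def glue_mat_def ab by (rule rel_mat_mult_eq_zero) auto
    ultimately show ?thesis by simp
  qed
  moreover have "inj_mat x b * inj_mat x a = (0\<^sub>m (dI (tgt Q b)) (dI (src Q a)) :: 'k mat)"
    unfolding inj_mat_def ab by (rule rel_mat_mult_eq_zero) auto
  ultimately show "ext_mat c0 \<beta> \<gamma> b * ext_mat c0 \<beta> \<gamma> a = (0\<^sub>m (dP (tgt Q b) + dI (tgt Q b)) (dP (src Q a) + dI (src Q a)) :: 'k mat)"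
    unfolding ext_mat_def ab
    by (intro four_block_upper_mult_eq_zero)
      (use proj_mat_carrier[of y b, unfolded ab] glue_mat_carrier[of c0 \<beta> \<gamma> b, unfolded ab]
        inj_mat_carrier[of x b, unfolded ab] in simp_all)
qed (use y_vert x_vert in \<open>simp_all add: short_paths_empty\<close>)

lemma rep_hom_ext_incl: "rep_hom Q (proj_rep y) (ext_rep c0 \<beta> \<gamma>) (ext_incl :: 'v \<Rightarrow> 'k::field mat)"
  unfolding rep_hom_def
proof (intro conjI ballI)
  fix c assume c: "c \<in> arrs Q"
  show "ext_incl (tgt Q c) * snd (proj_rep y) c = snd (ext_rep c0 \<beta> \<gamma>) c * (ext_incl (src Q c) :: 'k mat)"
  proof (rule mat_eq_on_vecI[of _ "dP (tgt Q c) + dI (tgt Q c)" "dP (src Q c)"])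
    fix p :: "'k vec" assume p: "p \<in> carrier_vec (dP (src Q c))"
    have "(ext_incl (tgt Q c) * proj_mat y c) *\<^sub>v p = ext_incl (tgt Q c) *\<^sub>v (proj_mat y c *\<^sub>v p)"
      by (rule assoc_mult_mat_vec[OF ext_incl_carrier proj_mat_carrier p])
    also have "\<dots> = (proj_mat y c *\<^sub>v p) @\<^sub>v 0\<^sub>v (dI (tgt Q c))"
      using p by (simp add: ext_incl_mult_vec)
    also have "\<dots> = ext_mat c0 \<beta> \<gamma> c *\<^sub>v (p @\<^sub>v 0\<^sub>v (dI (src Q c)))"
      using p by (simp add: ext_mat_mult_vec)
    also have "\<dots> = ext_mat c0 \<beta> \<gamma> c *\<^sub>v (ext_incl (src Q c) *\<^sub>v p)"
      using p by (simp add: ext_incl_mult_vec)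
    also have "\<dots> = (ext_mat c0 \<beta> \<gamma> c * ext_incl (src Q c)) *\<^sub>v p"
      by (rule assoc_mult_mat_vec[OF ext_mat_carrier ext_incl_carrier p, symmetric])
    finally show "(ext_incl (tgt Q c) * snd (proj_rep y) c) *\<^sub>v p = (snd (ext_rep c0 \<beta> \<gamma>) c * ext_incl (src Q c)) *\<^sub>v p"
      using c by simp
  qed (use c mult_carrier_mat[OF ext_incl_carrier proj_mat_carrier]
      mult_carrier_mat[OF ext_mat_carrier ext_incl_carrier] in simp_all)
qed simp

lemma rep_hom_ext_proj: "rep_hom Q (ext_rep c0 \<beta> \<gamma>) (inj_rep x) (ext_proj :: 'v \<Rightarrow> 'k::field mat)"
  unfolding rep_hom_def
proof (intro conjI ballI)
  fix c assume c: "c \<in> arrs Q"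
  show "ext_proj (tgt Q c) * snd (ext_rep c0 \<beta> \<gamma>) c = snd (inj_rep x) c * (ext_proj (src Q c) :: 'k mat)"
  proof (rule mat_eq_on_vecI[of _ "dI (tgt Q c)" "dP (src Q c) + dI (src Q c)"])
    fix e :: "'k vec" assume "e \<in> carrier_vec (dP (src Q c) + dI (src Q c))"
    then obtain a d where a: "a \<in> carrier_vec (dP (src Q c))" and d: "d \<in> carrier_vec (dI (src Q c))"
      and e: "e = a @\<^sub>v d" by (rule carrier_vec_append_cases)
    have ec: "e \<in> carrier_vec (dP (src Q c) + dI (src Q c))" using a d e by simp
    have "(ext_proj (tgt Q c) * ext_mat c0 \<beta> \<gamma> c) *\<^sub>v e = ext_proj (tgt Q c) *\<^sub>v (ext_mat c0 \<beta> \<gamma> c *\<^sub>v e)"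
      by (rule assoc_mult_mat_vec[OF ext_proj_carrier ext_mat_carrier ec])
    also have "\<dots> = inj_mat x c *\<^sub>v d"
      using a d by (simp add: e ext_mat_mult_vec ext_proj_mult_vec)
    also have "\<dots> = inj_mat x c *\<^sub>v (ext_proj (src Q c) *\<^sub>v e)"
      using a d by (simp add: e ext_proj_mult_vec)
    also have "\<dots> = (inj_mat x c * ext_proj (src Q c)) *\<^sub>v e"
      by (rule assoc_mult_mat_vec[OF inj_mat_carrier ext_proj_carrier ec, symmetric])
    finally show "(ext_proj (tgt Q c) * snd (ext_rep c0 \<beta> \<gamma>) c) *\<^sub>v e = (snd (inj_rep x) c * ext_proj (src Q c)) *\<^sub>v e"
      using c by simp
  qed (use c mult_carrier_mat[OF ext_proj_carrier ext_mat_carrier]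
      mult_carrier_mat[OF inj_mat_carrier ext_proj_carrier] in simp_all)
qed simp

lemma ses_ext_rep: "ses Q (proj_rep y) (ext_rep c0 \<beta> \<gamma>) (inj_rep x) ext_incl (ext_proj :: 'v \<Rightarrow> 'k::field mat)"
  unfolding ses_def
proof (intro conjI ballI)
  fix w and e :: "'k vec" assume "e \<in> carrier_vec (fst (ext_rep c0 \<beta> \<gamma>) w)"
  then obtain a d where a: "a \<in> carrier_vec (dP w)" and d: "d \<in> carrier_vec (dI w)"
    and e: "e = a @\<^sub>v d" by (auto elim: carrier_vec_append_cases)
  have "(\<exists>p\<in>carrier_vec (dP w). ext_incl w *\<^sub>v p = e) \<longleftrightarrow> d = 0\<^sub>v (dI w)"
    using a d by (auto simp: e ext_incl_mult_vec)
  then show "(ext_proj w *\<^sub>v e = 0\<^sub>v (fst (inj_rep x) w)) =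
      (\<exists>p\<in>carrier_vec (fst (proj_rep y) w). ext_incl w *\<^sub>v p = e)"
    using a d by (simp add: e ext_proj_mult_vec)
next
  show "hom_inj Q (proj_rep y) (ext_rep c0 \<beta> \<gamma>) (ext_incl :: 'v \<Rightarrow> 'k mat)"
    unfolding hom_inj_def
  proof (intro ballI impI)
    fix w and p :: "'k vec"
    assume p: "p \<in> carrier_vec (fst (proj_rep y) w)" and "ext_incl w *\<^sub>v p = 0\<^sub>v (fst (ext_rep c0 \<beta> \<gamma>) w)"
    then have "p @\<^sub>v 0\<^sub>v (dI w) = 0\<^sub>v (dP w) @\<^sub>v 0\<^sub>v (dI w)" by (simp add: ext_incl_mult_vec)
    then show "p = 0\<^sub>v (fst (proj_rep y) w)" using p by (simp del: zero_vec_append)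
  qed
  show "hom_surj Q (ext_rep c0 \<beta> \<gamma>) (inj_rep x) (ext_proj :: 'v \<Rightarrow> 'k mat)"
    unfolding hom_surj_def
  proof (intro ballI)
    fix w and d :: "'k vec" assume "d \<in> carrier_vec (fst (inj_rep x) w)"
    then show "\<exists>e\<in>carrier_vec (fst (ext_rep c0 \<beta> \<gamma>) w). ext_proj w *\<^sub>v e = d"
      by (intro bexI[of _ "0\<^sub>v (dP w) @\<^sub>v d"]) (simp_all add: ext_proj_mult_vec)
  qed
qed (simp_all add: is_rep_proj_rep is_rep_inj_rep y_vert x_vert is_rep_ext_rep rep_hom_ext_incl rep_hom_ext_proj)

lemma glue_mat_mult_label_vec:
  assumes "Some b \<in> set (short_paths (src Q c) x)"
  shows "glue_mat c0 \<beta> \<gamma> c *\<^sub>v label_vec (short_paths (src Q c) x) (Some b) = (if c = c0 \<and> b = \<beta>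
    then label_vec (short_paths y (tgt Q c)) (Some \<gamma>) else 0\<^sub>v (dP (tgt Q c)))"
  unfolding glue_mat_def rel_mat_mult_label_vec[OF distinct_short_paths assms]
  by (auto simp: label_vec_def intro!: eq_vecI)

lemma retraction_incl:
  fixes r :: "'v \<Rightarrow> 'k::field mat"
  assumes r: "rep_hom Q (ext_rep c0 \<beta> \<gamma>) (proj_rep y) r"
    and rf: "\<forall>v\<in>verts Q. r v * ext_incl v = 1\<^sub>m (dP v)"
    and w: "w \<in> verts Q" and p: "p \<in> carrier_vec (dP w)"
  shows "r w *\<^sub>v (p @\<^sub>v 0\<^sub>v (dI w)) = p"
proof -
  have "(r w * ext_incl w) *\<^sub>v p = r w *\<^sub>v (p @\<^sub>v 0\<^sub>v (dI w))"
    using assoc_mult_mat_vec[OF rep_hom_carrier[OF r w, simplified] ext_incl_carrier p] ext_incl_mult_vec[OF p]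
    by simp
  then show ?thesis using rf w p by simp
qed

lemma retraction_glue:
  fixes r :: "'v \<Rightarrow> 'k::field mat"
  assumes r: "rep_hom Q (ext_rep c0 \<beta> \<gamma>) (proj_rep y) r" and c: "c \<in> arrs Q" and d: "d \<in> carrier_vec (dI (src Q c))"
  shows "r (tgt Q c) *\<^sub>v ((glue_mat c0 \<beta> \<gamma> c *\<^sub>v d) @\<^sub>v (inj_mat x c *\<^sub>v d))
    = proj_mat y c *\<^sub>v (r (src Q c) *\<^sub>v (0\<^sub>v (dP (src Q c)) @\<^sub>v d))"
proof -
  note rs = rep_hom_carrier[OF r arr_src_in_verts[OF finite_quiver c], simplified]
  note rt = rep_hom_carrier[OF r arr_tgt_in_verts[OF finite_quiver c], simplified]
  have e: "0\<^sub>v (dP (src Q c)) @\<^sub>v d \<in> carrier_vec (dP (src Q c) + dI (src Q c))" using d by simp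
  have "(glue_mat c0 \<beta> \<gamma> c *\<^sub>v d) @\<^sub>v (inj_mat x c *\<^sub>v d) = ext_mat c0 \<beta> \<gamma> c *\<^sub>v (0\<^sub>v (dP (src Q c)) @\<^sub>v d)"
    using d by (simp add: ext_mat_mult_vec)
  also have "r (tgt Q c) *\<^sub>v \<dots> = (r (tgt Q c) * ext_mat c0 \<beta> \<gamma> c) *\<^sub>v (0\<^sub>v (dP (src Q c)) @\<^sub>v d)"
    by (rule assoc_mult_mat_vec[OF rt ext_mat_carrier e, symmetric])
  also have "\<dots> = (proj_mat y c * r (src Q c)) *\<^sub>v (0\<^sub>v (dP (src Q c)) @\<^sub>v d)"
    using rep_hom_arr[OF r c] c by simp
  also have "\<dots> = proj_mat y c *\<^sub>v (r (src Q c) *\<^sub>v (0\<^sub>v (dP (src Q c)) @\<^sub>v d))"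
    by (rule assoc_mult_mat_vec[OF proj_mat_carrier rs e])
  finally show ?thesis .
qed

lemma retraction_glue_index:
  fixes r :: "'v \<Rightarrow> 'k::field mat"
  assumes r: "rep_hom Q (ext_rep c0 \<beta> \<gamma>) (proj_rep y) r" and c: "c \<in> arrs Q"
    and d: "d \<in> carrier_vec (dI (src Q c))" and k: "k < dP (tgt Q c)"
  shows "(r (tgt Q c) *\<^sub>v ((glue_mat c0 \<beta> \<gamma> c *\<^sub>v d) @\<^sub>v (inj_mat x c *\<^sub>v d))) $ k =
    (if short_paths y (tgt Q c) ! k = Some c \<and> src Q c = y
     then (r (src Q c) *\<^sub>v (0\<^sub>v (dP (src Q c)) @\<^sub>v d)) $ 0 else 0)"
proof -
  have q: "r (src Q c) *\<^sub>v (0\<^sub>v (dP (src Q c)) @\<^sub>v d) \<in> carrier_vec (dP (src Q c))"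
    using mult_mat_vec_carrier[OF rep_hom_carrier[OF r arr_src_in_verts[OF finite_quiver c]]] d by simp
  show ?thesis unfolding retraction_glue[OF r c d] by (rule proj_mat_mult_vec_index[OF q k])
qed

lemma ext_not_split_if_three_out_arrows:
  assumes b: "b1 \<in> arrs Q" "b2 \<in> arrs Q" "b3 \<in> arrs Q" "src Q b1 = y" "src Q b2 = y" "src Q b3 = y"
    "tgt Q b1 = x"
    and dist: "b1 \<noteq> b2" "b1 \<noteq> b3" "b2 \<noteq> b3"
  shows "\<not> ses_splits Q (proj_rep y) (ext_rep b2 b1 b2) (ext_incl :: 'v \<Rightarrow> 'k::field mat)"
proof
  assume "ses_splits Q (proj_rep y) (ext_rep b2 b1 b2) (ext_incl :: 'v \<Rightarrow> 'k mat)"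
  then obtain r where r: "rep_hom Q (ext_rep b2 b1 b2 :: ('v,'a,'k) rep) (proj_rep y) r"
    and rf: "\<forall>v\<in>verts Q. r v * ext_incl v = 1\<^sub>m (dP v)"
    unfolding ses_splits_def fst_proj_rep by blast
  have b1_path: "Some b1 \<in> set (short_paths y x)" using arr_in_short_paths[OF b(1)] b by simp
  define e1 :: "'k vec" where "e1 = label_vec (short_paths y x) (Some b1)"
  have e1: "e1 \<in> carrier_vec (dI y)" by (simp add: e1_def)
  have e1_image: "glue_mat b2 b1 b2 c *\<^sub>v e1 = (if c = b2 then label_vec (short_paths y (tgt Q c)) (Some b2)
      else 0\<^sub>v (dP (tgt Q c)))" "inj_mat x c *\<^sub>v e1 = 0\<^sub>v (dI (tgt Q c))"
    if "src Q c = y" "c \<noteq> b1" for c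
  proof -
    have path: "Some b1 \<in> set (short_paths (src Q c) x)" using b1_path that by simp
    show "glue_mat b2 b1 b2 c *\<^sub>v e1 = (if c = b2 then label_vec (short_paths y (tgt Q c)) (Some b2)
      else 0\<^sub>v (dP (tgt Q c)))"
      using that by (simp add: e1_def glue_mat_mult_label_vec[OF path, unfolded that(1)])
    show "inj_mat x c *\<^sub>v e1 = 0\<^sub>v (dI (tgt Q c))"
      using that by (simp add: e1_def inj_mat_mult_label_vec[OF path, unfolded that(1)])
  qed
  obtain k3 where k3: "k3 < dP (tgt Q b3)" "short_paths y (tgt Q b3) ! k3 = Some b3"
    using arr_in_short_paths[OF b(3)] b by (auto simp: in_set_conv_nth)
  obtain k2 where k2: "k2 < dP (tgt Q b2)" "short_paths y (tgt Q b2) ! k2 = Some b2"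
    using arr_in_short_paths[OF b(2)] b by (auto simp: in_set_conv_nth)
  have "(r y *\<^sub>v (0\<^sub>v (dP y) @\<^sub>v e1)) $ 0 = 0"
    using retraction_glue_index[OF r b(3) _ k3(1), of e1] e1 e1_image[OF b(6)] dist k3 b
      rep_hom_carrier[OF r arr_tgt_in_verts[OF finite_quiver b(3)]] by simp
  moreover have "(r y *\<^sub>v (0\<^sub>v (dP y) @\<^sub>v e1)) $ 0 = 1"
    using retraction_glue_index[OF r b(2) _ k2(1), of e1] e1 e1_image[OF b(5)] dist k2 b
      retraction_incl[OF r rf arr_tgt_in_verts[OF finite_quiver b(2)]] by simp
  ultimately show False by simp
qed

lemma ext_not_split_if_three_in_arrows:
  assumes b: "b1 \<in> arrs Q" "b2 \<in> arrs Q" "b3 \<in> arrs Q" "tgt Q b1 = x" "tgt Q b2 = x" "tgt Q b3 = x"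
    "src Q b1 = y"
    and dist: "b1 \<noteq> b2" "b1 \<noteq> b3" "b2 \<noteq> b3"
  shows "\<not> ses_splits Q (proj_rep y) (ext_rep b2 b2 b1) (ext_incl :: 'v \<Rightarrow> 'k::field mat)"
proof
  assume "ses_splits Q (proj_rep y) (ext_rep b2 b2 b1) (ext_incl :: 'v \<Rightarrow> 'k mat)"
  then obtain r where r: "rep_hom Q (ext_rep b2 b2 b1 :: ('v,'a,'k) rep) (proj_rep y) r"
    and rf: "\<forall>v\<in>verts Q. r v * ext_incl v = 1\<^sub>m (dP v)"
    unfolding ses_splits_def fst_proj_rep by blast
  define n :: "'k vec" where "n = label_vec (short_paths x x) None"
  define eb1 :: "'k vec" where "eb1 = label_vec (short_paths y x) (Some b1)"
  obtain k where k: "k < dP x" "short_paths y x ! k = Some b1"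
    using arr_in_short_paths[OF b(1)] b by (auto simp: in_set_conv_nth)
  have image: "(r x *\<^sub>v ((if c = b2 then eb1 else 0\<^sub>v (dP x)) @\<^sub>v n)) $ k = 0"
    if c: "c \<in> arrs Q" "tgt Q c = x" "c \<noteq> b1" for c
  proof -
    have path: "Some c \<in> set (short_paths (src Q c) x)" using arr_in_short_paths[OF c(1)] c by simp
    have "glue_mat b2 b2 b1 c *\<^sub>v label_vec (short_paths (src Q c) x) (Some c) =
        (if c = b2 then eb1 else 0\<^sub>v (dP x))"
      using c by (auto simp: glue_mat_mult_label_vec[OF path] eb1_def)
    moreover have "inj_mat x c *\<^sub>v label_vec (short_paths (src Q c) x) (Some c) = n"
      using c by (simp add: inj_mat_mult_label_vec[OF path] n_def)
    ultimately show ?thesis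
      using retraction_glue_index[OF r c(1) _ k(1)[folded c(2)], of "label_vec (short_paths (src Q c) x) (Some c)"]
        c k by simp
  qed
  have rx: "r x \<in> carrier_mat (dP x) (dP x + dI x)" using rep_hom_carrier[OF r x_vert] by simp
  have "eb1 @\<^sub>v n = (eb1 @\<^sub>v 0\<^sub>v (dI x)) + (0\<^sub>v (dP x) @\<^sub>v n)"
    by (simp add: append_vec_add[of _ "dP x" _ _ "dI x"] eb1_def n_def)
  then have "r x *\<^sub>v (eb1 @\<^sub>v n) = eb1 + r x *\<^sub>v (0\<^sub>v (dP x) @\<^sub>v n)"
    using rx retraction_incl[OF r rf x_vert, of eb1] by (simp add: mult_add_distrib_mat_vec eb1_def n_def)
  then have "(r x *\<^sub>v (eb1 @\<^sub>v n)) $ k = 1 + (r x *\<^sub>v (0\<^sub>v (dP x) @\<^sub>v n)) $ k"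
    using k rx by (simp add: eb1_def)
  then show False
    using image[OF b(2,5) not_sym[OF dist(1)]] image[OF b(3,6) not_sym[OF dist(2)]] dist by simp
qed

end

lemma three_distinct_elems:
  assumes "finite S" and "2 < card S"
  obtains a b c where "a \<in> S" "b \<in> S" "c \<in> S" "a \<noteq> b" "a \<noteq> c" "b \<noteq> c"
proof -
  obtain T where "T \<subseteq> S" "card T = 3" using obtain_subset_with_card_n[of 3 S] assms by auto
  then obtain a b c where "T = {a, b, c}" "a \<noteq> b" "b \<noteq> c" "a \<noteq> c" using card_3_iff by metis
  then show thesis using that \<open>T \<subseteq> S\<close> by auto
qed

context enumerated_quiver
begin

lemma cluster_tilting_ext1_inj_proj:
  fixes \<C> :: "('v,'a,'k::field) rep set"
  assumes n: "2 \<le> n" and ct: "n_cluster_tilting Q n \<C>" and y: "y \<in> verts Q" and x: "x \<in> verts Q"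
  shows "ext_zero Q (Suc 0) (inj_rep x) (proj_rep y :: ('v,'a,'k) rep)"
proof -
  have P: "proj_rep y \<in> \<C>" by (rule projective_in_cluster_tilting[OF finite_quiver ct projective_proj_rep[OF y]])
  have "inj_rep x \<in> \<C>" by (rule injective_in_cluster_tilting[OF ct P is_rep_inj_rep[OF x] injective_inj_rep[OF x]])
  then show ?thesis using cluster_tilting_ext_zero[OF ct _ P, of _ "Suc 0"] n by simp
qed

lemma in_degree_le_2:
  fixes \<C> :: "('v,'a,'k::field) rep set"
  assumes n: "2 \<le> n" and ct: "n_cluster_tilting Q n \<C>" and v: "v \<in> verts Q"
  shows "in_degree Q v \<le> 2"
proof (rule ccontr)
  assume "\<not> in_degree Q v \<le> 2"
  moreover have "finite {a \<in> arrs Q. tgt Q a = v}" using finite_quiver by (simp add: finite_quiver_def)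
  ultimately obtain b1 b2 b3 where "b1 \<in> {a \<in> arrs Q. tgt Q a = v}" "b2 \<in> {a \<in> arrs Q. tgt Q a = v}"
    "b3 \<in> {a \<in> arrs Q. tgt Q a = v}" and dist: "b1 \<noteq> b2" "b1 \<noteq> b3" "b2 \<noteq> b3"
    by (elim three_distinct_elems) (auto simp: in_degree_def)
  then have b: "b1 \<in> arrs Q" "b2 \<in> arrs Q" "b3 \<in> arrs Q" "tgt Q b1 = v" "tgt Q b2 = v" "tgt Q b3 = v"
    by auto
  interpret glued_extension Q arr_list "src Q b1" v
    using v arr_src_in_verts[OF finite_quiver b(1)] by unfold_locales
  have "ext_zero Q (Suc 0) (inj_rep v) (proj_rep (src Q b1) :: ('v,'a,'k) rep)"
    by (rule cluster_tilting_ext1_inj_proj[OF n ct arr_src_in_verts[OF finite_quiver b(1)] v])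
  then have "ses_splits Q (proj_rep (src Q b1)) (ext_rep b2 b2 b1) (ext_incl :: 'v \<Rightarrow> 'k mat)"
    by (rule ses_splits_if_ext1_zero[OF _ ses_ext_rep])
  with ext_not_split_if_three_in_arrows[OF b refl dist] show False by (rule notE)
qed

lemma out_degree_le_2:
  fixes \<C> :: "('v,'a,'k::field) rep set"
  assumes n: "2 \<le> n" and ct: "n_cluster_tilting Q n \<C>" and v: "v \<in> verts Q"
  shows "out_degree Q v \<le> 2"
proof (rule ccontr)
  assume "\<not> out_degree Q v \<le> 2"
  moreover have "finite {a \<in> arrs Q. src Q a = v}" using finite_quiver by (simp add: finite_quiver_def)
  ultimately obtain b1 b2 b3 where "b1 \<in> {a \<in> arrs Q. src Q a = v}" "b2 \<in> {a \<in> arrs Q. src Q a = v}"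
    "b3 \<in> {a \<in> arrs Q. src Q a = v}" and dist: "b1 \<noteq> b2" "b1 \<noteq> b3" "b2 \<noteq> b3"
    by (elim three_distinct_elems) (auto simp: out_degree_def)
  then have b: "b1 \<in> arrs Q" "b2 \<in> arrs Q" "b3 \<in> arrs Q" "src Q b1 = v" "src Q b2 = v" "src Q b3 = v"
    by auto
  interpret glued_extension Q arr_list v "tgt Q b1"
    using v arr_tgt_in_verts[OF finite_quiver b(1)] by unfold_locales
  have "ext_zero Q (Suc 0) (inj_rep (tgt Q b1)) (proj_rep v :: ('v,'a,'k) rep)"
    by (rule cluster_tilting_ext1_inj_proj[OF n ct v arr_tgt_in_verts[OF finite_quiver b(1)]])
  then have "ses_splits Q (proj_rep v) (ext_rep b2 b1 b2) (ext_incl :: 'v \<Rightarrow> 'k mat)"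
    by (rule ses_splits_if_ext1_zero[OF _ ses_ext_rep])
  with ext_not_split_if_three_out_arrows[OF b refl dist] show False by (rule notE)
qed

end

theorem lemma2p1:
  fixes Q :: "('v,'a) quiver" and n :: nat and \<C> :: "('v,'a,'k::field) rep set"
  assumes "finite_quiver Q" and "connected_quiver Q" and "n \<ge> 2"
    and "n_cluster_tilting Q n \<C>"
  shows "\<forall>v\<in>verts Q. in_degree Q v \<le> 2 \<and> out_degree Q v \<le> 2"
proof -
  obtain arr_list where "set arr_list = arrs Q" "distinct arr_list"
    using finite_distinct_list assms(1) unfolding finite_quiver_def by blast
  then interpret enumerated_quiver Q arr_list
    using assms(1) by unfold_locales
  show ?thesis using in_degree_le_2 out_degree_le_2 assms(3,4) by blast
qed

end
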